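(* Let $f:[a,b]\times[c,d]\to\mathbb{R}$ be continuous, with $0<a<b<\infty$, $0<c<d<\infty$ and $-1<p,q\le 0$. (1) If $0<\alpha,\beta<1$, then $$2\le\dim_H\Big(G\big({}^{(p,q)}_{(a,c)}\mathfrak{I}^{(\alpha,\beta)}f\big)\Big)\le\overline{\dim}_B\Big(G\big({}^{(p,q)}_{(a,c)}\mathfrak{I}^{(\alpha,\beta)}f\big)\Big)\le 3-\min\{\alpha,\beta\}.$$ (2) If $\alpha,\beta\ge1$, then the box dimension exists and $$\dim_H\Big(G\big({}^{(p,q)}_{(a,c)}\mathfrak{I}^{(\alpha,\beta)}f\big)\Big)=\dim_B\Big(G\big({}^{(p,q)}_{(a,c)}\mathfrak{I}^{(\alpha,\beta)}f\big)\Big)=2.$$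
   Context: For $f:[a,b]\times[c,d]\to\mathbb{R}$ with $0<a<b$, $0<c<d$, real $\alpha,\beta>0$ and $(p,q)\neq(-1,-1)$, the mixed Katugampola fractional integral is $$\big({}^{(p,q)}_{(a,c)}\mathfrak{I}^{(\alpha,\beta)}f\big)(x,y)=\frac{(p+1)^{1-\alpha}(q+1)^{1-\beta}}{\Gamma(\alpha)\Gamma(\beta)}\int_a^x\int_c^y (x^{p+1}-s^{p+1})^{\alpha-1}(y^{q+1}-t^{q+1})^{\beta-1}s^{p}t^{q}f(s,t)\,\mathrm{d}t\,\mathrm{d}s.$$ $G(g)=\{(x,y,g(x,y))\}\subset\mathbb{R}^3$ is the graph; $\dim_H$, $\dim_B$, $\overline{\dim}_B$ denote Hausdorff, box and upper box dimension. *)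

theory Defs
  imports "HOL-Analysis.Analysis"
begin

text \<open>The double integral is the (Henstock--Kurzweil) integral over the rectangle
  [a,x]x[c,y]; for these integrands it coincides with the Lebesgue integral.\<close>
definition katugampola_mixed ::
  "real \<Rightarrow> real \<Rightarrow> real \<Rightarrow> real \<Rightarrow> real \<Rightarrow> real \<Rightarrow> (real \<times> real \<Rightarrow> real) \<Rightarrow> real \<times> real \<Rightarrow> real" where
  "katugampola_mixed p q a c \<alpha> \<beta> f = (\<lambda>(x, y).
     (p + 1) powr (1 - \<alpha>) * (q + 1) powr (1 - \<beta>) / (Gamma \<alpha> * Gamma \<beta>) *
     integral (cbox (a, c) (x, y))
       (\<lambda>(s, t). (x powr (p + 1) - s powr (p + 1)) powr (\<alpha> - 1) *
                 (y powr (q + 1) - t powr (q + 1)) powr (\<beta> - 1) *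
                 s powr p * t powr q * f (s, t)))"

text \<open>Graph of g over [a,b]x[c,d], as a subset of R^3 = (R x R) x R
  (the product metric is the Euclidean one).\<close>
definition graph_on :: "real \<Rightarrow> real \<Rightarrow> real \<Rightarrow> real \<Rightarrow> (real \<times> real \<Rightarrow> real) \<Rightarrow> ((real \<times> real) \<times> real) set" where
  "graph_on a b c d g = {((x, y), g (x, y)) | x y. x \<in> {a..b} \<and> y \<in> {c..d}}"

text \<open>s-power of the diameter, with the conventions diam({})^s = 0 and t^0 = 1.\<close>
definition diam_pow :: "real \<Rightarrow> 'a::metric_space set \<Rightarrow> ennreal" where
  "diam_pow s U = (if U = {} then 0 else if s = 0 then 1 else ennreal (diameter U powr s))"

definition hausdorff_pre :: "real \<Rightarrow> real \<Rightarrow> 'a::metric_space set \<Rightarrow> ennreal" where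
  "hausdorff_pre s \<delta> E = Inf {(\<Sum>i. diam_pow s (U i)) | U.
       E \<subseteq> (\<Union>i. U i) \<and> (\<forall>i. bounded (U i) \<and> diameter (U i) \<le> \<delta>)}"

definition hausdorff_measure :: "real \<Rightarrow> 'a::metric_space set \<Rightarrow> ennreal" where
  "hausdorff_measure s E = (SUP \<delta>\<in>{0<..}. hausdorff_pre s \<delta> E)"

definition hausdorff_dim :: "'a::metric_space set \<Rightarrow> ereal" where
  "hausdorff_dim E = Inf {ereal s | s. s \<ge> 0 \<and> hausdorff_measure s E = 0}"

definition cover_number :: "real \<Rightarrow> 'a::metric_space set \<Rightarrow> nat" where
  "cover_number \<delta> E = Inf {card C | C. finite C \<and> E \<subseteq> \<Union>C \<and>
       (\<forall>U\<in>C. bounded U \<and> diameter U \<le> \<delta>)}"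

definition upper_box_dim :: "'a::metric_space set \<Rightarrow> ereal" where
  "upper_box_dim E = Limsup (at_right 0) (\<lambda>\<delta>. ereal (ln (real (cover_number \<delta> E)) / - ln \<delta>))"

definition lower_box_dim :: "'a::metric_space set \<Rightarrow> ereal" where
  "lower_box_dim E = Liminf (at_right 0) (\<lambda>\<delta>. ereal (ln (real (cover_number \<delta> E)) / - ln \<delta>))"

definition box_dim_exists :: "'a::metric_space set \<Rightarrow> bool" where
  "box_dim_exists E \<longleftrightarrow> lower_box_dim E = upper_box_dim E"

definition box_dim :: "'a::metric_space set \<Rightarrow> ereal" where
  "box_dim E = upper_box_dim E"

end

(*
  For alpha, beta > 0 the mixed Katugampola integral of a continuous f is Hoelder continuous on the
  rectangle with exponent gamma = min (min alpha 1) (min beta 1).  Writing it as the double integral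
  of k_x(s) l_y(t) f(s,t), where k_x is the one-variable kernel with upper endpoint x, it suffices
  that x |-> k_x is Hoelder continuous in L^1: from the explicit primitive of k_x one gets exponent
  alpha for alpha < 1 and a Lipschitz bound for alpha >= 1.

  The graph of a gamma-Hoelder function on a rectangle is covered by O(delta^(gamma - 3)) grid
  cubes of side delta, since over a grid square the function oscillates by O(delta^gamma); hence
  its upper box dimension is at most 3 - gamma.  Conversely the graph projects onto the rectangle
  without increasing diameters, so any cover by sets of diameter at most 1 has sum of squared
  diameters at least a quarter of the area, and the Hausdorff dimension is at least 2.  Together
  with dim_H <= lower box dimension <= upper box dimension this gives both claims, with
  gamma = min alpha beta in the first case and gamma = 1 in the second.
*)

theory Submission
  imports Defs
begin

section \<open>The one-variable Katugampola kernel\<close>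

(* The factor in s of the integrand of katugampola_mixed, cut off outside [u, x]. *)
definition katugampola_kernel :: "real \<Rightarrow> real \<Rightarrow> real \<Rightarrow> real \<Rightarrow> real \<Rightarrow> real" where
  "katugampola_kernel p \<alpha> u x s =
     (if u \<le> s \<and> s \<le> x then (x powr (p + 1) - s powr (p + 1)) powr (\<alpha> - 1) * s powr p else 0)"

lemma katugampola_kernel_nonneg: "0 \<le> katugampola_kernel p \<alpha> u x s"
  by (simp add: katugampola_kernel_def)

lemma katugampola_kernel_measurable [measurable]:
  "katugampola_kernel p \<alpha> u x \<in> borel_measurable borel"
  unfolding katugampola_kernel_def by measurable

lemma katugampola_kernel_primitive_deriv:
  fixes s x p \<alpha> :: real
  assumes "0 < s" "s < x" "-1 < p" "0 < \<alpha>"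
  shows "((\<lambda>s. - ((x powr (p + 1) - s powr (p + 1)) powr \<alpha>) / (\<alpha> * (p + 1))) has_real_derivative
           (x powr (p + 1) - s powr (p + 1)) powr (\<alpha> - 1) * s powr p) (at s)"
proof -
  have nz: "\<alpha> * (p + 1) \<noteq> 0" using assms by simp
  have "s powr (p + 1) < x powr (p + 1)" using assms by (intro powr_less_mono2) auto
  then have "((\<lambda>s. - ((x powr (p + 1) - s powr (p + 1)) powr \<alpha>) / (\<alpha> * (p + 1))) has_real_derivative
      - (\<alpha> * (x powr (p + 1) - s powr (p + 1)) powr (\<alpha> - 1) * - ((p + 1) * s powr (p + 1 - 1)))
        / (\<alpha> * (p + 1))) (at s)"
    using assms by (auto intro!: derivative_eq_intros)
  then show ?thesis
    by (rule DERIV_cong) (use nz in \<open>simp add: field_simps\<close>)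
qed

lemma katugampola_kernel_primitive_at_left:
  fixes x p \<alpha> :: real
  assumes "0 < x" "-1 < p" "0 < \<alpha>"
  shows "((\<lambda>s. - ((x powr (p + 1) - s powr (p + 1)) powr \<alpha>) / (\<alpha> * (p + 1))) \<longlongrightarrow> 0) (at_left x)"
proof -
  have "((\<lambda>s. x powr (p + 1) - s powr (p + 1)) \<longlongrightarrow> x powr (p + 1) - x powr (p + 1)) (at_left x)"
    using assms by (auto intro!: tendsto_eq_intros)
  moreover have "\<forall>\<^sub>F s in at_left x. 0 \<le> x powr (p + 1) - s powr (p + 1)"
    using eventually_at_left_real[OF assms(1)]
    by eventually_elim (use assms in \<open>auto intro: powr_mono2\<close>)
  ultimately have "((\<lambda>s. (x powr (p + 1) - s powr (p + 1)) powr \<alpha>) \<longlongrightarrow> 0) (at_left x)"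
    using assms by (intro tendsto_zero_powrI[OF _ tendsto_const]) auto
  then show ?thesis by (auto intro: tendsto_divide_zero tendsto_minus[THEN tendsto_eq_rhs])
qed

lemma katugampola_kernel_integral_open:
  assumes u: "0 < u" "u < x" and p: "-1 < p" and \<alpha>: "0 < \<alpha>"
  shows "has_bochner_integral lborel (katugampola_kernel p \<alpha> u x)
           ((x powr (p + 1) - u powr (p + 1)) powr \<alpha> / (\<alpha> * (p + 1)))"
proof -
  define \<phi> where "\<phi> s = (x powr (p + 1) - s powr (p + 1)) powr (\<alpha> - 1) * s powr p" for s
  define F where "F s = - ((x powr (p + 1) - s powr (p + 1)) powr \<alpha>) / (\<alpha> * (p + 1))" for s
  have F_deriv: "DERIV F s :> \<phi> s" if "ereal u < ereal s" "ereal s < ereal x" for s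
    unfolding F_def \<phi>_def using that u p \<alpha> by (intro katugampola_kernel_primitive_deriv) auto
  have \<phi>_cont: "isCont \<phi> s" if "ereal u < ereal s" "ereal s < ereal x" for s
  proof -
    have "s powr (p + 1) < x powr (p + 1)" using that u p by (intro powr_less_mono2) auto
    then show ?thesis using that u unfolding \<phi>_def by (auto intro!: continuous_intros)
  qed
  have "isCont F u"
  proof -
    have "u powr (p + 1) < x powr (p + 1)" using u p by (intro powr_less_mono2) auto
    then show ?thesis unfolding F_def using u \<alpha> p by (auto intro!: continuous_intros)
  qed
  then have F_at_u: "((F \<circ> real_of_ereal) \<longlongrightarrow> F u) (at_right (ereal u))"
    by (simp add: ereal_tendsto_simps isCont_def filterlim_at_split)
  have F_at_x: "((F \<circ> real_of_ereal) \<longlongrightarrow> 0) (at_left (ereal x))"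
    unfolding F_def using katugampola_kernel_primitive_at_left[of x p \<alpha>] u p \<alpha>
    by (simp add: ereal_tendsto_simps)
  note FTC = interval_integral_FTC_nonneg[of "ereal u" "ereal x" F \<phi>, OF _ F_deriv \<phi>_cont _ F_at_u F_at_x]
  have ae: "AE s in lborel. indicator {u<..<x} s *\<^sub>R \<phi> s = katugampola_kernel p \<alpha> u x s"
    using AE_lborel_singleton[of u]
    by eventually_elim (auto simp: katugampola_kernel_def \<phi>_def indicator_def)
  have "has_bochner_integral lborel (\<lambda>s. indicator {u<..<x} s *\<^sub>R \<phi> s) (0 - F u)"
    using FTC u unfolding interval_lebesgue_integral_def set_integrable_def
      set_lebesgue_integral_def einterval_eq_Icc
    by (auto simp: \<phi>_def has_bochner_integral_iff)
  then show ?thesis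
    by (subst has_bochner_integral_cong_AE[OF _ _ ae, symmetric]) (auto simp: F_def)
qed

lemma katugampola_kernel_integral:
  assumes "0 < u" "u \<le> x" "-1 < p" "0 < \<alpha>"
  shows "has_bochner_integral lborel (katugampola_kernel p \<alpha> u x)
           ((x powr (p + 1) - u powr (p + 1)) powr \<alpha> / (\<alpha> * (p + 1)))"
proof (cases "u = x")
  case True
  then have "katugampola_kernel p \<alpha> u x = (\<lambda>_. 0)"
    by (auto simp: katugampola_kernel_def fun_eq_iff)
  then show ?thesis using True by (simp add: has_bochner_integral_zero)
qed (use assms katugampola_kernel_integral_open in auto)

lemma katugampola_kernel_integrable:
  "0 < u \<Longrightarrow> u \<le> x \<Longrightarrow> -1 < p \<Longrightarrow> 0 < \<alpha> \<Longrightarrow> integrable lborel (katugampola_kernel p \<alpha> u x)"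
  using katugampola_kernel_integral by (blast intro: integrable.intros)

lemma katugampola_kernel_L1_le:
  assumes "0 < a" "a \<le> x" "x \<le> b" "-1 < p" "0 < \<alpha>"
  shows "(\<integral>s. \<bar>katugampola_kernel p \<alpha> a x s\<bar> \<partial>lborel) \<le> (b powr (p + 1)) powr \<alpha> / (\<alpha> * (p + 1))"
proof -
  have e: "0 < p + 1" using assms by simp
  have ax: "a powr (p + 1) \<le> x powr (p + 1)" and xb: "x powr (p + 1) \<le> b powr (p + 1)"
    using assms e by (auto intro: powr_mono2)
  have "x powr (p + 1) - a powr (p + 1) \<le> b powr (p + 1)"
    using xb powr_ge_zero[of a "p + 1"] by linarith
  then have "(x powr (p + 1) - a powr (p + 1)) powr \<alpha> \<le> (b powr (p + 1)) powr \<alpha>"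
    using assms ax by (intro powr_mono2) auto
  then show ?thesis
    using katugampola_kernel_integral[OF assms(1,2,4,5)] assms e
    by (simp add: katugampola_kernel_nonneg has_bochner_integral_iff divide_right_mono)
qed

lemma powr_diff_le_concave:
  fixes r a x x' :: real
  assumes "0 < a" "a \<le> x" "x \<le> x'" "0 < r" "r \<le> 1"
  shows "x' powr r - x powr r \<le> r * a powr (r - 1) * (x' - x)"
proof (cases "x = x'")
  case False
  then have lt: "x < x'" using assms by simp
  have "\<And>t. x \<le> t \<Longrightarrow> t \<le> x' \<Longrightarrow> DERIV (\<lambda>t. t powr r) t :> r * t powr (r - 1)"
    using assms by (auto intro!: derivative_eq_intros)
  then obtain z where z: "x < z" "z < x'" "x' powr r - x powr r = (x' - x) * (r * z powr (r - 1))"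
    using MVT2[OF lt, of "\<lambda>t. t powr r" "\<lambda>t. r * t powr (r - 1)"] by auto
  have "z powr (r - 1) \<le> a powr (r - 1)"
    using assms z by (intro powr_mono2') auto
  then show ?thesis using z lt assms by (simp add: mult.commute mult_left_mono)
qed simp

lemma powr_diff_le_convex:
  fixes v w r :: real
  assumes "0 \<le> v" "v \<le> w" "1 \<le> r"
  shows "w powr r - v powr r \<le> r * w powr (r - 1) * (w - v)"
proof (cases "v = w")
  case False
  then have lt: "v < w" using assms by simp
  have "continuous_on {v..w} (\<lambda>t. t powr r)"
    using assms by (intro continuous_on_powr') (auto intro: continuous_intros)
  moreover have "(\<lambda>t. t powr r) differentiable (at t)" if "v < t" "t < w" for t
    using that assms by (auto intro!: derivative_eq_intros simp: real_differentiable_def)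
  ultimately obtain l z where
    z: "v < z" "z < w" "DERIV (\<lambda>t. t powr r) z :> l" "w powr r - v powr r = (w - v) * l"
    using MVT[OF lt] by blast
  have "DERIV (\<lambda>t. t powr r) z :> r * z powr (r - 1)"
    using z assms by (auto intro!: derivative_eq_intros)
  then have "l = r * z powr (r - 1)" using DERIV_unique z(3) by blast
  moreover have "z powr (r - 1) \<le> w powr (r - 1)" using assms z by (intro powr_mono2) auto
  ultimately show ?thesis using z lt assms by (simp add: mult.commute mult_left_mono)
qed simp

lemma katugampola_kernel_L1_diff_singular:
  assumes a: "0 < a" "a \<le> x" "x \<le> x'" and p: "-1 < p" "p \<le> 0" and \<alpha>: "0 < \<alpha>" "\<alpha> < 1"
  shows "(\<integral>s. \<bar>katugampola_kernel p \<alpha> a x' s - katugampola_kernel p \<alpha> a x s\<bar> \<partial>lborel)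
           \<le> 2 * ((p + 1) * a powr p) powr \<alpha> / (\<alpha> * (p + 1)) * (x' - x) powr \<alpha>"
proof -
  let ?k = "katugampola_kernel p \<alpha>"
  have e: "0 < p + 1" using p by simp
  have "0 < x" "a \<le> x'" using a by auto
  note I_ax = katugampola_kernel_integral[OF a(1,2) p(1) \<alpha>(1)]
    and I_ax' = katugampola_kernel_integral[OF a(1) \<open>a \<le> x'\<close> p(1) \<alpha>(1)]
    and I_xx' = katugampola_kernel_integral[OF \<open>0 < x\<close> a(3) p(1) \<alpha>(1)]
  have xx': "x powr (p + 1) \<le> x' powr (p + 1)" and ax: "a powr (p + 1) \<le> x powr (p + 1)"
    using a e by (auto intro: powr_mono2)
  \<comment> \<open>For \<open>\<alpha> < 1\<close> the kernel decreases as its upper endpoint grows.\<close>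
  have pointwise: "\<bar>?k a x' s - ?k a x s\<bar> \<le> ?k a x s - ?k a x' s + 2 * ?k x x' s" for s
  proof (cases "a \<le> s \<and> s < x")
    case True
    then have "s powr (p + 1) < x powr (p + 1)" using a e by (intro powr_less_mono2) auto
    then have "(x' powr (p + 1) - s powr (p + 1)) powr (\<alpha> - 1) \<le> (x powr (p + 1) - s powr (p + 1)) powr (\<alpha> - 1)"
      using xx' \<alpha> by (intro powr_mono2') auto
    then show ?thesis using True a by (simp add: katugampola_kernel_def mult_right_mono)
  qed (use a in \<open>auto simp: katugampola_kernel_def\<close>)
  note I_ax[THEN integrable.intros] I_ax'[THEN integrable.intros]
    I_xx'[THEN integrable.intros]
  then have "(\<integral>s. \<bar>?k a x' s - ?k a x s\<bar> \<partial>lborel) \<le> (\<integral>s. ?k a x s - ?k a x' s + 2 * ?k x x' s \<partial>lborel)"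
    using pointwise by (intro integral_mono) auto
  also have "\<dots> = ((x powr (p + 1) - a powr (p + 1)) powr \<alpha> - (x' powr (p + 1) - a powr (p + 1)) powr \<alpha>
                    + 2 * (x' powr (p + 1) - x powr (p + 1)) powr \<alpha>) / (\<alpha> * (p + 1))"
    using I_ax I_ax' I_xx'
    by (auto simp: has_bochner_integral_iff add_divide_distrib diff_divide_distrib)
  also have "\<dots> \<le> 2 * (x' powr (p + 1) - x powr (p + 1)) powr \<alpha> / (\<alpha> * (p + 1))"
    using xx' ax \<alpha> e by (intro divide_right_mono) (auto intro: powr_mono2)
  also have "\<dots> \<le> 2 * ((p + 1) * a powr p * (x' - x)) powr \<alpha> / (\<alpha> * (p + 1))"
    using powr_diff_le_concave[of a x x' "p + 1"] xx' a p \<alpha> e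
    by (intro divide_right_mono mult_left_mono powr_mono2) auto
  also have "\<dots> = 2 * ((p + 1) * a powr p) powr \<alpha> / (\<alpha> * (p + 1)) * (x' - x) powr \<alpha>"
    using a e by (simp add: powr_mult)
  finally show ?thesis .
qed

lemma katugampola_kernel_L1_diff_regular:
  assumes a: "0 < a" "a \<le> x" "x \<le> x'" "x' \<le> b" and p: "-1 < p" "p \<le> 0" and \<alpha>: "1 \<le> \<alpha>"
  shows "(\<integral>s. \<bar>katugampola_kernel p \<alpha> a x' s - katugampola_kernel p \<alpha> a x s\<bar> \<partial>lborel)
           \<le> (b powr (p + 1)) powr (\<alpha> - 1) * a powr p * (x' - x)"
proof -
  let ?k = "katugampola_kernel p \<alpha>"
  let ?A = "\<lambda>x. x powr (p + 1) - a powr (p + 1)"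
  have e: "0 < p + 1" using p by simp
  have "a \<le> x'" "0 < \<alpha>" using a \<alpha> by auto
  note I_ax = katugampola_kernel_integral[OF a(1,2) p(1) \<open>0 < \<alpha>\<close>]
    and I_ax' = katugampola_kernel_integral[OF a(1) \<open>a \<le> x'\<close> p(1) \<open>0 < \<alpha>\<close>]
  have xx': "x powr (p + 1) \<le> x' powr (p + 1)" and ax: "a powr (p + 1) \<le> x powr (p + 1)"
    and x'b: "x' powr (p + 1) \<le> b powr (p + 1)"
    using a e by (auto intro: powr_mono2)
  have pointwise: "\<bar>?k a x' s - ?k a x s\<bar> = ?k a x' s - ?k a x s" for s
  proof (cases "a \<le> s \<and> s < x")
    case True
    then have "s powr (p + 1) < x powr (p + 1)" using a e by (intro powr_less_mono2) auto
    then have "(x powr (p + 1) - s powr (p + 1)) powr (\<alpha> - 1) \<le> (x' powr (p + 1) - s powr (p + 1)) powr (\<alpha> - 1)"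
      using xx' \<alpha> by (intro powr_mono2) auto
    then show ?thesis using True a by (simp add: katugampola_kernel_def mult_right_mono)
  qed (use a in \<open>auto simp: katugampola_kernel_def\<close>)
  have "(\<integral>s. \<bar>?k a x' s - ?k a x s\<bar> \<partial>lborel) = (?A x' powr \<alpha> - ?A x powr \<alpha>) / (\<alpha> * (p + 1))"
    unfolding pointwise using I_ax I_ax'
    by (auto simp: has_bochner_integral_iff diff_divide_distrib)
  also have "\<dots> \<le> \<alpha> * ?A x' powr (\<alpha> - 1) * ((p + 1) * a powr p * (x' - x)) / (\<alpha> * (p + 1))"
  proof (intro divide_right_mono)
    have "?A x' powr \<alpha> - ?A x powr \<alpha> \<le> \<alpha> * ?A x' powr (\<alpha> - 1) * (?A x' - ?A x)"
      using xx' ax \<alpha> by (intro powr_diff_le_convex) auto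
    also have "\<dots> \<le> \<alpha> * ?A x' powr (\<alpha> - 1) * ((p + 1) * a powr p * (x' - x))"
      using powr_diff_le_concave[of a x x' "p + 1"] a p \<alpha> by (intro mult_left_mono) auto
    finally show "?A x' powr \<alpha> - ?A x powr \<alpha> \<le> \<alpha> * ?A x' powr (\<alpha> - 1) * ((p + 1) * a powr p * (x' - x))" .
  qed (use \<alpha> e in auto)
  also have "\<dots> = (\<alpha> * (p + 1)) * (?A x' powr (\<alpha> - 1) * a powr p * (x' - x)) / (\<alpha> * (p + 1))"
    by (simp add: mult_ac)
  also have "\<dots> = ?A x' powr (\<alpha> - 1) * a powr p * (x' - x)"
    using \<alpha> e by simp
  also have "\<dots> \<le> (b powr (p + 1)) powr (\<alpha> - 1) * a powr p * (x' - x)"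
  proof -
    have "?A x' \<le> b powr (p + 1)" using x'b powr_ge_zero[of a "p + 1"] by linarith
    then show ?thesis using ax xx' \<alpha> a by (intro mult_right_mono powr_mono2) auto
  qed
  finally show ?thesis .
qed

lemma katugampola_kernel_L1_holder:
  assumes "0 < a" "-1 < p" "p \<le> 0" "0 < \<alpha>"
  obtains C where "0 \<le> C"
    "\<And>x x'. x \<in> {a..b} \<Longrightarrow> x' \<in> {a..b} \<Longrightarrow>
       (\<integral>s. \<bar>katugampola_kernel p \<alpha> a x' s - katugampola_kernel p \<alpha> a x s\<bar> \<partial>lborel)
         \<le> C * \<bar>x' - x\<bar> powr min \<alpha> 1"
proof -
  define D where "D x x' = (\<integral>s. \<bar>katugampola_kernel p \<alpha> a x' s - katugampola_kernel p \<alpha> a x s\<bar> \<partial>lborel)"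
    for x x'
  have D_sym: "D x x' = D x' x" for x x' by (simp add: D_def abs_minus_commute)
  define C where "C = (if \<alpha> < 1 then 2 * ((p + 1) * a powr p) powr \<alpha> / (\<alpha> * (p + 1))
                       else (b powr (p + 1)) powr (\<alpha> - 1) * a powr p)"
  have "0 \<le> C" using assms by (simp add: C_def)
  moreover have ordered: "D x x' \<le> C * \<bar>x' - x\<bar> powr min \<alpha> 1"
    if "x \<in> {a..b}" "x' \<in> {a..b}" "x \<le> x'" for x x'
    using that assms katugampola_kernel_L1_diff_singular[of a x x' p \<alpha>]
      katugampola_kernel_L1_diff_regular[of a x x' b p \<alpha>]
    by (cases "\<alpha> < 1") (auto simp: C_def D_def)
  have "D x x' \<le> C * \<bar>x' - x\<bar> powr min \<alpha> 1" if "x \<in> {a..b}" "x' \<in> {a..b}" for x x'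
    using that by (induction x x' rule: linorder_wlog)
      (use ordered D_sym abs_minus_commute in metis)+
  ultimately show ?thesis using that unfolding D_def by blast
qed

section \<open>Separable integrals over the plane\<close>

lemma borel_measurable_tensor [measurable]:
  fixes g1 g2 :: "real \<Rightarrow> real"
  assumes [measurable]: "g1 \<in> borel_measurable borel" "g2 \<in> borel_measurable borel"
  shows "(\<lambda>z::real \<times> real. g1 (fst z) * g2 (snd z)) \<in> borel_measurable borel"
proof -
  have "(\<lambda>z::real \<times> real. g1 (fst z) * g2 (snd z)) \<in> borel_measurable (borel \<Otimes>\<^sub>M borel)"
    by measurable
  then show ?thesis by (simp add: borel_prod)
qed

lemma has_bochner_integral_lborel_tensor:
  fixes g1 g2 :: "real \<Rightarrow> real"
  assumes [measurable]: "g1 \<in> borel_measurable borel" "g2 \<in> borel_measurable borel"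
    and nonneg: "\<And>s. 0 \<le> g1 s" "\<And>t. 0 \<le> g2 t"
    and int: "integrable lborel g1" "integrable lborel g2"
  shows "has_bochner_integral lborel (\<lambda>z::real \<times> real. g1 (fst z) * g2 (snd z))
           (integral\<^sup>L lborel g1 * integral\<^sup>L lborel g2)"
proof (rule has_bochner_integral_nn_integral)
  have "(\<integral>\<^sup>+z. ennreal (g1 (fst z) * g2 (snd z)) \<partial>(lborel :: (real \<times> real) measure))
      = (\<integral>\<^sup>+z. ennreal (g1 (fst z) * g2 (snd z)) \<partial>(lborel \<Otimes>\<^sub>M lborel))"
    by (simp add: lborel_prod)
  also have "\<dots> = (\<integral>\<^sup>+x. \<integral>\<^sup>+y. ennreal (g1 x) * ennreal (g2 y) \<partial>lborel \<partial>lborel)"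
    using nonneg by (subst lborel.nn_integral_fst[symmetric]) (auto simp: ennreal_mult)
  also have "\<dots> = (\<integral>\<^sup>+x. ennreal (g1 x) \<partial>lborel) * (\<integral>\<^sup>+y. ennreal (g2 y) \<partial>lborel)"
    by (simp add: nn_integral_cmult nn_integral_multc)
  also have "\<dots> = ennreal (integral\<^sup>L lborel g1 * integral\<^sup>L lborel g2)"
    using int nonneg by (simp add: nn_integral_eq_integral ennreal_mult integral_nonneg_AE)
  finally show "(\<integral>\<^sup>+z. ennreal (g1 (fst z) * g2 (snd z)) \<partial>lborel)
      = ennreal (integral\<^sup>L lborel g1 * integral\<^sup>L lborel g2)" .
qed (use nonneg in \<open>auto intro!: integral_nonneg_AE\<close>)

lemma separable_integral_bound:
  fixes g1 g2 :: "real \<Rightarrow> real" and h :: "real \<times> real \<Rightarrow> real"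
  assumes [measurable]: "g1 \<in> borel_measurable borel" "g2 \<in> borel_measurable borel"
      "h \<in> borel_measurable borel"
    and int: "integrable lborel g1" "integrable lborel g2"
    and h_le: "\<And>z. \<bar>h z\<bar> \<le> M"
  shows "integrable lborel (\<lambda>z. g1 (fst z) * g2 (snd z) * h z)"
    "\<bar>\<integral>z. g1 (fst z) * g2 (snd z) * h z \<partial>lborel\<bar>
       \<le> M * (\<integral>s. \<bar>g1 s\<bar> \<partial>lborel) * (\<integral>t. \<bar>g2 t\<bar> \<partial>lborel)"
proof -
  have tensor: "has_bochner_integral lborel (\<lambda>z::real \<times> real. \<bar>g1 (fst z)\<bar> * \<bar>g2 (snd z)\<bar>)
                  ((\<integral>s. \<bar>g1 s\<bar> \<partial>lborel) * (\<integral>t. \<bar>g2 t\<bar> \<partial>lborel))"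
    using int by (intro has_bochner_integral_lborel_tensor) auto
  have majorant: "integrable lborel (\<lambda>z::real \<times> real. M * (\<bar>g1 (fst z)\<bar> * \<bar>g2 (snd z)\<bar>))"
    using tensor by (auto intro: integrable.intros)
  have M: "0 \<le> M" using h_le[of 0] by simp
  have le: "norm (g1 (fst z) * g2 (snd z) * h z) \<le> norm (M * (\<bar>g1 (fst z)\<bar> * \<bar>g2 (snd z)\<bar>))" for z
    using mult_left_mono[OF h_le[of z], of "\<bar>g1 (fst z)\<bar> * \<bar>g2 (snd z)\<bar>"] M
    by (simp add: abs_mult mult.commute)
  show int_prod: "integrable lborel (\<lambda>z. g1 (fst z) * g2 (snd z) * h z)"
    using le by (intro Bochner_Integration.integrable_bound[OF majorant]) auto
  have "\<bar>\<integral>z. g1 (fst z) * g2 (snd z) * h z \<partial>lborel\<bar>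
      \<le> (\<integral>z. M * (\<bar>g1 (fst z)\<bar> * \<bar>g2 (snd z)\<bar>) \<partial>lborel)"
    using Bochner_Integration.integral_norm_bound_integral[OF int_prod majorant] le M by (simp add: abs_mult)
  also have "\<dots> = M * (\<integral>s. \<bar>g1 s\<bar> \<partial>lborel) * (\<integral>t. \<bar>g2 t\<bar> \<partial>lborel)"
    using tensor by (simp add: has_bochner_integral_iff)
  finally show "\<bar>\<integral>z. g1 (fst z) * g2 (snd z) * h z \<partial>lborel\<bar>
       \<le> M * (\<integral>s. \<bar>g1 s\<bar> \<partial>lborel) * (\<integral>t. \<bar>g2 t\<bar> \<partial>lborel)" .
qed

lemma separable_integral_diff_le:
  fixes k k' l l' :: "real \<Rightarrow> real" and h :: "real \<times> real \<Rightarrow> real"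
  assumes [measurable]: "k \<in> borel_measurable borel" "k' \<in> borel_measurable borel"
      "l \<in> borel_measurable borel" "l' \<in> borel_measurable borel" "h \<in> borel_measurable borel"
    and int: "integrable lborel k" "integrable lborel k'" "integrable lborel l" "integrable lborel l'"
    and h_le: "\<And>z. \<bar>h z\<bar> \<le> M"
  shows "\<bar>(\<integral>z. k (fst z) * l (snd z) * h z \<partial>lborel) - (\<integral>z. k' (fst z) * l' (snd z) * h z \<partial>lborel)\<bar>
           \<le> M * ((\<integral>s. \<bar>k s - k' s\<bar> \<partial>lborel) * (\<integral>t. \<bar>l t\<bar> \<partial>lborel)
                  + (\<integral>s. \<bar>k' s\<bar> \<partial>lborel) * (\<integral>t. \<bar>l t - l' t\<bar> \<partial>lborel))"
proof -
  note bound = separable_integral_bound[OF _ _ _ _ _ h_le]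
  have "(\<integral>z. k (fst z) * l (snd z) * h z \<partial>lborel) - (\<integral>z. k' (fst z) * l' (snd z) * h z \<partial>lborel)
      = (\<integral>z. k (fst z) * l (snd z) * h z - k' (fst z) * l' (snd z) * h z \<partial>lborel)"
    using int by (intro Bochner_Integration.integral_diff[symmetric] bound) auto
  also have "\<dots> = (\<integral>z. (k (fst z) - k' (fst z)) * l (snd z) * h z
                    + k' (fst z) * (l (snd z) - l' (snd z)) * h z \<partial>lborel)"
    by (simp add: algebra_simps)
  also have "\<dots> = (\<integral>z. (k (fst z) - k' (fst z)) * l (snd z) * h z \<partial>lborel)
                 + (\<integral>z. k' (fst z) * (l (snd z) - l' (snd z)) * h z \<partial>lborel)"
    using int by (intro Bochner_Integration.integral_add bound) auto
  finally have split: "(\<integral>z. k (fst z) * l (snd z) * h z \<partial>lborel) - (\<integral>z. k' (fst z) * l' (snd z) * h z \<partial>lborel)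
      = (\<integral>z. (k (fst z) - k' (fst z)) * l (snd z) * h z \<partial>lborel)
        + (\<integral>z. k' (fst z) * (l (snd z) - l' (snd z)) * h z \<partial>lborel)" .
  have "\<bar>\<integral>z. (k (fst z) - k' (fst z)) * l (snd z) * h z \<partial>lborel\<bar>
      \<le> M * (\<integral>s. \<bar>k s - k' s\<bar> \<partial>lborel) * (\<integral>t. \<bar>l t\<bar> \<partial>lborel)"
    using int by (intro bound) auto
  moreover have "\<bar>\<integral>z. k' (fst z) * (l (snd z) - l' (snd z)) * h z \<partial>lborel\<bar>
      \<le> M * (\<integral>s. \<bar>k' s\<bar> \<partial>lborel) * (\<integral>t. \<bar>l t - l' t\<bar> \<partial>lborel)"
    using int by (intro bound) auto
  ultimately show ?thesis unfolding split by (simp add: algebra_simps)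
qed

section \<open>Hoelder continuity of the mixed Katugampola integral\<close>

definition extend_zero :: "'a set \<Rightarrow> ('a \<Rightarrow> real) \<Rightarrow> 'a \<Rightarrow> real" where
  "extend_zero S f z = (if z \<in> S then f z else 0)"

lemma extend_zero_measurable:
  fixes f :: "'a::topological_space \<Rightarrow> real"
  assumes "closed S" "continuous_on S f"
  shows "extend_zero S f \<in> borel_measurable borel"
  unfolding extend_zero_def using assms
  by (intro borel_measurable_continuous_on_if) (auto intro: continuous_intros)

lemma extend_zero_bounded:
  fixes f :: "'a::topological_space \<Rightarrow> real"
  assumes "compact S" "continuous_on S f"
  obtains M where "\<And>z. \<bar>extend_zero S f z\<bar> \<le> M"
proof -
  obtain B where B: "\<And>z. z \<in> S \<Longrightarrow> \<bar>f z\<bar> \<le> B"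
    using compact_imp_bounded[OF compact_continuous_image[OF assms(2,1)]]
    by (auto simp: bounded_iff)
  have "\<bar>extend_zero S f z\<bar> \<le> max B 0" for z
    using B[of z] by (auto simp: extend_zero_def)
  then show ?thesis using that by blast
qed

lemma katugampola_mixed_eq_separable_integral:
  assumes cont: "continuous_on (cbox (a, c) (b, d)) f"
    and xy: "0 < a" "a \<le> x" "x \<le> b" "0 < c" "c \<le> y" "y \<le> d"
    and "-1 < p" "-1 < q" "0 < \<alpha>" "0 < \<beta>"
  shows "katugampola_mixed p q a c \<alpha> \<beta> f (x, y) =
     (p + 1) powr (1 - \<alpha>) * (q + 1) powr (1 - \<beta>) / (Gamma \<alpha> * Gamma \<beta>) *
     (\<integral>z. katugampola_kernel p \<alpha> a x (fst z) * katugampola_kernel q \<beta> c y (snd z) *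
          extend_zero (cbox (a, c) (b, d)) f z \<partial>lborel)"
proof -
  define H where "H z = katugampola_kernel p \<alpha> a x (fst z) * katugampola_kernel q \<beta> c y (snd z) *
                         extend_zero (cbox (a, c) (b, d)) f z" for z
  obtain M where "\<And>z. \<bar>extend_zero (cbox (a, c) (b, d)) f z\<bar> \<le> M"
    using extend_zero_bounded[OF compact_cbox cont] by blast
  then have "integrable lborel H"
    unfolding H_def using assms
    by (intro separable_integral_bound(1) extend_zero_measurable[OF closed_cbox cont]
        katugampola_kernel_integrable) auto
  then have "integral UNIV H = integral\<^sup>L lborel H"
    by (rule integral_unique[OF has_integral_integral_lborel])
  moreover have "H z = 0" if "z \<notin> cbox (a, c) (x, y)" for z
    using that by (cases z) (auto simp: H_def katugampola_kernel_def cbox_Pair_eq)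
  then have "integral (cbox (a, c) (x, y)) H = integral UNIV H"
    by (subst integral_restrict_UNIV[symmetric]) (auto intro!: arg_cong[where f="integral UNIV"])
  moreover have "integral (cbox (a, c) (x, y)) (\<lambda>(s, t). (x powr (p + 1) - s powr (p + 1)) powr (\<alpha> - 1) *
                 (y powr (q + 1) - t powr (q + 1)) powr (\<beta> - 1) * s powr p * t powr q * f (s, t))
      = integral (cbox (a, c) (x, y)) H"
    using xy by (intro integral_cong)
      (auto simp: H_def katugampola_kernel_def extend_zero_def cbox_Pair_eq)
  ultimately show ?thesis unfolding katugampola_mixed_def H_def by simp
qed

lemma powr_le_scaled_powr:
  fixes t r D \<gamma> \<gamma>' :: real
  assumes "0 \<le> t" "t \<le> r" "r \<le> D" "1 \<le> D" "0 < \<gamma>" "\<gamma> \<le> \<gamma>'"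
  shows "t powr \<gamma>' \<le> D powr (\<gamma>' - \<gamma>) * r powr \<gamma>"
proof (cases "r = 0")
  case False
  have "t powr \<gamma>' \<le> r powr \<gamma>'" using assms by (intro powr_mono2) auto
  also have "\<dots> = r powr (\<gamma>' - \<gamma>) * r powr \<gamma>" by (simp add: powr_add[symmetric])
  also have "\<dots> \<le> D powr (\<gamma>' - \<gamma>) * r powr \<gamma>"
    using assms False by (intro mult_right_mono powr_mono2) auto
  finally show ?thesis .
qed (use assms in simp)

lemma katugampola_separable_integral_holder:
  fixes h :: "real \<times> real \<Rightarrow> real"
  assumes [measurable]: "h \<in> borel_measurable borel" and h_le: "\<And>z. \<bar>h z\<bar> \<le> M"
    and "0 < a" "0 < c" "-1 < p" "p \<le> 0" "-1 < q" "q \<le> 0" "0 < \<alpha>" "0 < \<beta>"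
  obtains A B where "0 \<le> A" "0 \<le> B"
    "\<And>x y x' y'. x \<in> {a..b} \<Longrightarrow> x' \<in> {a..b} \<Longrightarrow> y \<in> {c..d} \<Longrightarrow> y' \<in> {c..d} \<Longrightarrow>
       \<bar>(\<integral>z. katugampola_kernel p \<alpha> a x (fst z) * katugampola_kernel q \<beta> c y (snd z) * h z \<partial>lborel)
        - (\<integral>z. katugampola_kernel p \<alpha> a x' (fst z) * katugampola_kernel q \<beta> c y' (snd z) * h z \<partial>lborel)\<bar>
         \<le> A * \<bar>x - x'\<bar> powr min \<alpha> 1 + B * \<bar>y - y'\<bar> powr min \<beta> 1"
proof -
  let ?k = katugampola_kernel
  define Bx where "Bx = (b powr (p + 1)) powr \<alpha> / (\<alpha> * (p + 1))"
  define By where "By = (d powr (q + 1)) powr \<beta> / (\<beta> * (q + 1))"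
  obtain Cx where Cx: "0 \<le> Cx" "\<And>x x'. x \<in> {a..b} \<Longrightarrow> x' \<in> {a..b} \<Longrightarrow>
      (\<integral>s. \<bar>?k p \<alpha> a x' s - ?k p \<alpha> a x s\<bar> \<partial>lborel) \<le> Cx * \<bar>x' - x\<bar> powr min \<alpha> 1"
    using katugampola_kernel_L1_holder[of a p \<alpha>] assms by blast
  obtain Cy where Cy: "0 \<le> Cy" "\<And>y y'. y \<in> {c..d} \<Longrightarrow> y' \<in> {c..d} \<Longrightarrow>
      (\<integral>t. \<bar>?k q \<beta> c y' t - ?k q \<beta> c y t\<bar> \<partial>lborel) \<le> Cy * \<bar>y' - y\<bar> powr min \<beta> 1"
    using katugampola_kernel_L1_holder[of c q \<beta>] assms by blast
  have "0 \<le> M" using h_le[of 0] by simp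
  have "0 \<le> Bx" "0 \<le> By" using assms by (simp_all add: Bx_def By_def)
  have "\<bar>(\<integral>z. ?k p \<alpha> a x (fst z) * ?k q \<beta> c y (snd z) * h z \<partial>lborel)
         - (\<integral>z. ?k p \<alpha> a x' (fst z) * ?k q \<beta> c y' (snd z) * h z \<partial>lborel)\<bar>
      \<le> (M * Cx * By) * \<bar>x - x'\<bar> powr min \<alpha> 1 + (M * Bx * Cy) * \<bar>y - y'\<bar> powr min \<beta> 1"
    if xy: "x \<in> {a..b}" "x' \<in> {a..b}" "y \<in> {c..d}" "y' \<in> {c..d}" for x y x' y'
  proof -
    have "\<bar>(\<integral>z. ?k p \<alpha> a x (fst z) * ?k q \<beta> c y (snd z) * h z \<partial>lborel)
          - (\<integral>z. ?k p \<alpha> a x' (fst z) * ?k q \<beta> c y' (snd z) * h z \<partial>lborel)\<bar>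
        \<le> M * ((\<integral>s. \<bar>?k p \<alpha> a x s - ?k p \<alpha> a x' s\<bar> \<partial>lborel) * (\<integral>t. \<bar>?k q \<beta> c y t\<bar> \<partial>lborel)
             + (\<integral>s. \<bar>?k p \<alpha> a x' s\<bar> \<partial>lborel) * (\<integral>t. \<bar>?k q \<beta> c y t - ?k q \<beta> c y' t\<bar> \<partial>lborel))"
      using xy assms by (intro separable_integral_diff_le h_le katugampola_kernel_integrable) auto
    also have "\<dots> \<le> M * ((Cx * \<bar>x - x'\<bar> powr min \<alpha> 1) * By + Bx * (Cy * \<bar>y - y'\<bar> powr min \<beta> 1))"
      using xy assms Cx(2)[of x' x] Cy(2)[of y' y] Cx(1) Cy(1) \<open>0 \<le> M\<close>
        katugampola_kernel_L1_le[of a x' b p \<alpha>] katugampola_kernel_L1_le[of c y d q \<beta>]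
      unfolding Bx_def By_def
      by (intro mult_left_mono add_mono mult_mono) auto
    finally show ?thesis by (simp add: algebra_simps)
  qed
  moreover have "0 \<le> M * Cx * By" "0 \<le> M * Bx * Cy"
    using \<open>0 \<le> M\<close> \<open>0 \<le> Bx\<close> \<open>0 \<le> By\<close> Cx(1) Cy(1) by simp_all
  ultimately show ?thesis using that by blast
qed

lemma katugampola_mixed_coordinate_holder:
  assumes cont: "continuous_on (cbox (a, c) (b, d)) f"
    and "0 < a" "0 < c" "-1 < p" "p \<le> 0" "-1 < q" "q \<le> 0" "0 < \<alpha>" "0 < \<beta>"
  obtains A B where "0 \<le> A" "0 \<le> B"
    "\<And>x y x' y'. (x, y) \<in> cbox (a, c) (b, d) \<Longrightarrow> (x', y') \<in> cbox (a, c) (b, d) \<Longrightarrow>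
       \<bar>katugampola_mixed p q a c \<alpha> \<beta> f (x, y) - katugampola_mixed p q a c \<alpha> \<beta> f (x', y')\<bar>
         \<le> A * \<bar>x - x'\<bar> powr min \<alpha> 1 + B * \<bar>y - y'\<bar> powr min \<beta> 1"
proof -
  define C0 where "C0 = (p + 1) powr (1 - \<alpha>) * (q + 1) powr (1 - \<beta>) / (Gamma \<alpha> * Gamma \<beta>)"
  define \<Phi> where "\<Phi> x y = (\<integral>z. katugampola_kernel p \<alpha> a x (fst z) * katugampola_kernel q \<beta> c y (snd z) *
                            extend_zero (cbox (a, c) (b, d)) f z \<partial>lborel)" for x y
  obtain M where M: "\<And>z. \<bar>extend_zero (cbox (a, c) (b, d)) f z\<bar> \<le> M"
    using extend_zero_bounded[OF compact_cbox cont] by blast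
  obtain A B where AB: "0 \<le> A" "0 \<le> B"
    "\<And>x y x' y'. x \<in> {a..b} \<Longrightarrow> x' \<in> {a..b} \<Longrightarrow> y \<in> {c..d} \<Longrightarrow> y' \<in> {c..d} \<Longrightarrow>
       \<bar>\<Phi> x y - \<Phi> x' y'\<bar> \<le> A * \<bar>x - x'\<bar> powr min \<alpha> 1 + B * \<bar>y - y'\<bar> powr min \<beta> 1"
    unfolding \<Phi>_def
    using katugampola_separable_integral_holder[OF extend_zero_measurable[OF closed_cbox cont] M
      assms(2-9)] by blast
  have "\<bar>katugampola_mixed p q a c \<alpha> \<beta> f (x, y) - katugampola_mixed p q a c \<alpha> \<beta> f (x', y')\<bar>
      \<le> (\<bar>C0\<bar> * A) * \<bar>x - x'\<bar> powr min \<alpha> 1 + (\<bar>C0\<bar> * B) * \<bar>y - y'\<bar> powr min \<beta> 1"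
    if "(x, y) \<in> cbox (a, c) (b, d)" "(x', y') \<in> cbox (a, c) (b, d)" for x y x' y'
  proof -
    have xy: "x \<in> {a..b}" "y \<in> {c..d}" "x' \<in> {a..b}" "y' \<in> {c..d}"
      using that by (auto simp: cbox_Pair_eq)
    have "katugampola_mixed p q a c \<alpha> \<beta> f (x, y) - katugampola_mixed p q a c \<alpha> \<beta> f (x', y')
        = C0 * (\<Phi> x y - \<Phi> x' y')"
      using xy assms unfolding C0_def \<Phi>_def
      by (simp add: katugampola_mixed_eq_separable_integral[OF cont] right_diff_distrib)
    then have "\<bar>katugampola_mixed p q a c \<alpha> \<beta> f (x, y) - katugampola_mixed p q a c \<alpha> \<beta> f (x', y')\<bar>
        = \<bar>C0\<bar> * \<bar>\<Phi> x y - \<Phi> x' y'\<bar>"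
      by (simp add: abs_mult)
    also have "\<dots> \<le> \<bar>C0\<bar> * (A * \<bar>x - x'\<bar> powr min \<alpha> 1 + B * \<bar>y - y'\<bar> powr min \<beta> 1)"
      using AB(3)[OF xy(1,3,2,4)] by (rule mult_left_mono) simp
    finally show ?thesis by (simp add: algebra_simps)
  qed
  moreover have "0 \<le> \<bar>C0\<bar> * A" "0 \<le> \<bar>C0\<bar> * B" using AB by simp_all
  ultimately show ?thesis using that by blast
qed

lemma katugampola_mixed_holder:
  assumes "continuous_on (cbox (a, c) (b, d)) f"
    and "0 < a" "0 < c" "-1 < p" "p \<le> 0" "-1 < q" "q \<le> 0" "0 < \<alpha>" "0 < \<beta>"
  obtains L where "0 < L"
    "\<And>P Q. P \<in> cbox (a, c) (b, d) \<Longrightarrow> Q \<in> cbox (a, c) (b, d) \<Longrightarrow>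
       \<bar>katugampola_mixed p q a c \<alpha> \<beta> f P - katugampola_mixed p q a c \<alpha> \<beta> f Q\<bar>
         \<le> L * dist P Q powr min (min \<alpha> 1) (min \<beta> 1)"
proof -
  define \<gamma> where "\<gamma> = min (min \<alpha> 1) (min \<beta> 1)"
  define D where "D = max 1 (diameter (cbox (a, c) (b, d)))"
  obtain A B where AB: "0 \<le> A" "0 \<le> B"
    "\<And>x y x' y'. (x, y) \<in> cbox (a, c) (b, d) \<Longrightarrow> (x', y') \<in> cbox (a, c) (b, d) \<Longrightarrow>
       \<bar>katugampola_mixed p q a c \<alpha> \<beta> f (x, y) - katugampola_mixed p q a c \<alpha> \<beta> f (x', y')\<bar>
         \<le> A * \<bar>x - x'\<bar> powr min \<alpha> 1 + B * \<bar>y - y'\<bar> powr min \<beta> 1"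
    using katugampola_mixed_coordinate_holder[OF assms] by blast
  define L where "L = A * D powr (min \<alpha> 1 - \<gamma>) + B * D powr (min \<beta> 1 - \<gamma>) + 1"
  have "\<bar>katugampola_mixed p q a c \<alpha> \<beta> f P - katugampola_mixed p q a c \<alpha> \<beta> f Q\<bar> \<le> L * dist P Q powr \<gamma>"
    if PQ: "P \<in> cbox (a, c) (b, d)" "Q \<in> cbox (a, c) (b, d)" for P Q
  proof -
    obtain x y x' y' where P: "P = (x, y)" and Q: "Q = (x', y')" by (cases P, cases Q)
    have "dist P Q \<le> D" unfolding D_def using diameter_bounded_bound[OF bounded_cbox PQ] by simp
    moreover have "0 < \<gamma>" "\<gamma> \<le> min \<alpha> 1" "\<gamma> \<le> min \<beta> 1" "1 \<le> D"
      using assms by (auto simp: \<gamma>_def D_def)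
    ultimately have "\<bar>x - x'\<bar> powr min \<alpha> 1 \<le> D powr (min \<alpha> 1 - \<gamma>) * dist P Q powr \<gamma>"
      "\<bar>y - y'\<bar> powr min \<beta> 1 \<le> D powr (min \<beta> 1 - \<gamma>) * dist P Q powr \<gamma>"
      using dist_fst_le[of P Q] dist_snd_le[of P Q]
      by (auto intro!: powr_le_scaled_powr simp: P Q dist_real_def)
    then have "A * \<bar>x - x'\<bar> powr min \<alpha> 1 + B * \<bar>y - y'\<bar> powr min \<beta> 1
        \<le> (L - 1) * dist P Q powr \<gamma>"
      unfolding L_def using AB(1,2) by (simp add: algebra_simps add_mono mult_left_mono)
    moreover have "0 \<le> dist P Q powr \<gamma>" by simp
    ultimately show ?thesis using AB(3)[of x y x' y'] PQ unfolding P Q by argo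
  qed
  moreover have "0 < L" using AB by (simp add: L_def add_nonneg_pos)
  ultimately show ?thesis using that unfolding \<gamma>_def by blast
qed

section \<open>Covering numbers and fractal dimensions\<close>

definition delta_covers :: "real \<Rightarrow> 'a::metric_space set \<Rightarrow> 'a set set set" where
  "delta_covers \<delta> E = {C. finite C \<and> E \<subseteq> \<Union>C \<and> (\<forall>U\<in>C. bounded U \<and> diameter U \<le> \<delta>)}"

lemma cover_number_eq_Inf_card: "cover_number \<delta> E = Inf (card ` delta_covers \<delta> E)"
  unfolding cover_number_def delta_covers_def by (auto intro!: arg_cong[where f = Inf])

lemma cover_number_le_card: "C \<in> delta_covers \<delta> E \<Longrightarrow> cover_number \<delta> E \<le> card C"
  unfolding cover_number_eq_Inf_card by (auto intro: wellorder_Inf_le1)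

lemma cover_number_attained:
  assumes "delta_covers \<delta> E \<noteq> {}"
  obtains C where "C \<in> delta_covers \<delta> E" "card C = cover_number \<delta> E"
proof -
  have "cover_number \<delta> E \<in> card ` delta_covers \<delta> E"
    unfolding cover_number_eq_Inf_card using assms by (intro Inf_nat_def1) auto
  then show ?thesis using that by auto
qed

lemma cover_number_pos:
  assumes "E \<noteq> {}" "delta_covers \<delta> E \<noteq> {}"
  shows "0 < cover_number \<delta> E"
proof -
  obtain C where "C \<in> delta_covers \<delta> E" "card C = cover_number \<delta> E"
    using cover_number_attained[OF assms(2)] by blast
  then show ?thesis using assms(1) by (auto simp: delta_covers_def)
qed

lemma hausdorff_pre_antimono:
  assumes "\<delta> \<le> \<epsilon>"
  shows "hausdorff_pre s \<epsilon> E \<le> hausdorff_pre s \<delta> E"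
  unfolding hausdorff_pre_def using assms
  by (intro Inf_superset_mono) (auto intro: order_trans)

lemma hausdorff_pre_le_cover_number:
  assumes "0 \<le> s" "0 < \<delta>" "delta_covers \<delta> E \<noteq> {}"
  shows "hausdorff_pre s \<delta> E \<le> ennreal (real (cover_number \<delta> E) * \<delta> powr s)"
proof -
  obtain C where C: "C \<in> delta_covers \<delta> E" "card C = cover_number \<delta> E"
    using cover_number_attained[OF assms(3)] by blast
  then obtain xs where xs: "set xs = C" "distinct xs"
    using finite_distinct_list[of C] by (auto simp: delta_covers_def)
  define U where "U i = (if i < length xs then xs ! i else {})" for i
  have U: "bounded (U i) \<and> diameter (U i) \<le> \<delta>" for i
    using C xs nth_mem[of i xs] assms by (auto simp: U_def delta_covers_def)
  have "\<Union>C \<subseteq> (\<Union>i. U i)"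
    using xs by (auto simp: U_def in_set_conv_nth)
  then have "E \<subseteq> (\<Union>i. U i)"
    using C by (auto simp: delta_covers_def)
  then have "hausdorff_pre s \<delta> E \<le> (\<Sum>i. diam_pow s (U i))"
    unfolding hausdorff_pre_def using U by (intro Inf_lower) blast
  also have "\<dots> = (\<Sum>i<length xs. diam_pow s (U i))"
    by (rule suminf_finite) (auto simp: U_def diam_pow_def)
  also have "\<dots> \<le> (\<Sum>i<length xs. ennreal (\<delta> powr s))"
  proof (intro sum_mono)
    fix i
    have "diameter (U i) powr s \<le> \<delta> powr s" if "s \<noteq> 0"
      using U[of i] diameter_ge_0[of "U i"] assms by (intro powr_mono2) auto
    then show "diam_pow s (U i) \<le> ennreal (\<delta> powr s)"
      using assms by (auto simp: diam_pow_def intro: ennreal_leI)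
  qed
  also have "\<dots> = ennreal (real (cover_number \<delta> E) * \<delta> powr s)"
    using C(2) distinct_card[OF xs(2)] xs(1) by (simp add: ennreal_of_nat_eq_real_of_nat ennreal_mult)
  finally show ?thesis .
qed

lemma less_powr_of_log_ratio_less:
  fixes N \<delta> t :: real
  assumes "0 < \<delta>" "\<delta> < 1" "0 < N" "ln N / - ln \<delta> < t"
  shows "N < \<delta> powr (- t)"
proof -
  have "0 < - ln \<delta>" using assms by simp
  then have "ln N < t * - ln \<delta>" using assms(4) by (simp only: pos_divide_less_eq)
  also have "\<dots> = ln (\<delta> powr (- t))" using assms by (simp add: ln_powr)
  finally show ?thesis using assms by (metis ln_less_cancel_iff powr_gt_zero less_irrefl)
qed

lemma Limsup_log_ratio_le:
  fixes N :: "real \<Rightarrow> real"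
  assumes "0 < K" and "eventually (\<lambda>\<delta>. 0 < N \<delta> \<and> N \<delta> \<le> K * \<delta> powr (- s)) (at_right 0)"
  shows "Limsup (at_right 0) (\<lambda>\<delta>. ereal (ln (N \<delta>) / - ln \<delta>)) \<le> ereal s"
proof -
  have ev: "eventually (\<lambda>\<delta>. ereal (ln (N \<delta>) / - ln \<delta>) \<le> ereal (s + ln K / - ln \<delta>)) (at_right 0)"
    using assms(2) eventually_at_right_real[OF zero_less_one]
  proof eventually_elim
    case (elim \<delta>)
    then have "0 < - ln \<delta>" by simp
    have "ln (N \<delta>) \<le> ln (K * \<delta> powr (- s))" using elim assms(1) by simp
    also have "\<dots> = s * - ln \<delta> + ln K" using elim assms(1) by (simp add: ln_mult ln_powr)
    finally show ?case using \<open>0 < - ln \<delta>\<close> by (simp add: field_simps)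
  qed
  have lim: "((\<lambda>\<delta>. ereal (s + ln K / - ln \<delta>)) \<longlongrightarrow> ereal s) (at_right 0)"
  proof -
    have "filterlim (\<lambda>\<delta>::real. - ln \<delta>) at_top (at_right 0)"
      using filterlim_uminus_at_top[of "\<lambda>\<delta>. - ln \<delta>"] ln_at_0 by simp
    then have "((\<lambda>\<delta>. ln K / - ln \<delta>) \<longlongrightarrow> 0) (at_right 0)"
      by (intro tendsto_divide_0[OF tendsto_const] filterlim_at_top_imp_at_infinity)
    from tendsto_add[OF tendsto_const this, of s] show ?thesis by (intro tendsto_ereal) simp
  qed
  have "Limsup (at_right 0) (\<lambda>\<delta>. ereal (ln (N \<delta>) / - ln \<delta>))
      \<le> Limsup (at_right 0) (\<lambda>\<delta>. ereal (s + ln K / - ln \<delta>))"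
    by (rule Limsup_mono[OF ev])
  also have "\<dots> = ereal s" by (rule lim_imp_Limsup[OF _ lim]) simp
  finally show ?thesis .
qed

lemma lower_box_dim_nonneg:
  assumes "E \<noteq> {}" "\<And>\<delta>. 0 < \<delta> \<Longrightarrow> delta_covers \<delta> E \<noteq> {}"
  shows "0 \<le> lower_box_dim E"
  unfolding lower_box_dim_def
proof (rule Liminf_bounded)
  show "\<forall>\<^sub>F \<delta> in at_right 0. 0 \<le> ereal (ln (real (cover_number \<delta> E)) / - ln \<delta>)"
    using eventually_at_right_real[OF zero_less_one]
  proof eventually_elim
    case (elim \<delta>)
    then have "0 \<le> ln (real (cover_number \<delta> E))"
      using cover_number_pos[OF assms(1) assms(2)] by (simp add: Suc_le_eq)
    moreover have "ln \<delta> < 0" using elim by simp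
    ultimately show ?case by (simp add: divide_nonneg_neg)
  qed
qed

lemma lower_box_dim_le_upper_box_dim: "lower_box_dim E \<le> upper_box_dim E"
  unfolding lower_box_dim_def upper_box_dim_def by (rule Liminf_le_Limsup) simp

lemma hausdorff_pre_le_of_log_ratio_less:
  assumes "E \<noteq> {}" "delta_covers \<delta> E \<noteq> {}" "0 < \<delta>" "\<delta> < 1" "0 \<le> s"
    and "ln (real (cover_number \<delta> E)) / - ln \<delta> < t"
  shows "hausdorff_pre s \<delta> E \<le> ennreal (\<delta> powr (s - t))"
proof -
  have "0 < real (cover_number \<delta> E)" using cover_number_pos[OF assms(1,2)] by simp
  then have "real (cover_number \<delta> E) < \<delta> powr (- t)"
    using assms by (intro less_powr_of_log_ratio_less) auto
  then have "real (cover_number \<delta> E) * \<delta> powr s \<le> \<delta> powr (- t) * \<delta> powr s"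
    by (intro mult_right_mono) auto
  then have "real (cover_number \<delta> E) * \<delta> powr s \<le> \<delta> powr (s - t)"
    by (simp add: powr_add[symmetric])
  then show ?thesis
    using hausdorff_pre_le_cover_number[OF assms(5,3,2)] by (meson ennreal_leI order_trans)
qed

lemma hausdorff_measure_eq_0_of_log_ratio_frequently_less:
  assumes "E \<noteq> {}" and covers: "\<And>\<delta>. 0 < \<delta> \<Longrightarrow> delta_covers \<delta> E \<noteq> {}"
    and "t < s" "0 \<le> s"
    and often: "\<exists>\<^sub>F \<delta> in at_right 0. ln (real (cover_number \<delta> E)) / - ln \<delta> < t"
  shows "hausdorff_measure s E = 0"
proof -
  have small: "hausdorff_pre s \<epsilon> E \<le> ennreal e" if "0 < \<epsilon>" "0 < e" for \<epsilon> e
  proof -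
    have "((\<lambda>\<delta>::real. \<delta> powr (s - t)) \<longlongrightarrow> 0) (at_right 0)"
      using assms by (intro tendsto_zero_powrI) (auto intro: tendsto_ident_at simp: eventually_at_filter)
    then have "\<forall>\<^sub>F \<delta> in at_right 0. \<delta> powr (s - t) < e"
      using \<open>0 < e\<close> by (rule order_tendstoD)
    moreover have "\<forall>\<^sub>F \<delta> in at_right 0. 0 < \<delta> \<and> \<delta> < \<epsilon>"
      using eventually_at_right_real[OF \<open>0 < \<epsilon>\<close>] by (auto elim: eventually_mono)
    moreover have "\<forall>\<^sub>F \<delta> in at_right 0. \<delta> < (1::real)"
      using eventually_at_right_real[OF zero_less_one] by (auto elim: eventually_mono)
    ultimately have "\<forall>\<^sub>F \<delta> in at_right 0. \<delta> powr (s - t) < e \<and> 0 < \<delta> \<and> \<delta> < \<epsilon> \<and> \<delta> < 1"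
      by eventually_elim auto
    from frequently_ex[OF frequently_eventually_conj[OF often this]]
    obtain \<delta> where \<delta>: "0 < \<delta>" "\<delta> < \<epsilon>" "\<delta> < 1" "\<delta> powr (s - t) < e"
        "ln (real (cover_number \<delta> E)) / - ln \<delta> < t"
      by blast
    have "hausdorff_pre s \<epsilon> E \<le> hausdorff_pre s \<delta> E"
      using \<delta> by (intro hausdorff_pre_antimono) simp
    also have "\<dots> \<le> ennreal (\<delta> powr (s - t))"
      using \<delta> assms by (intro hausdorff_pre_le_of_log_ratio_less covers) auto
    also have "\<dots> \<le> ennreal e" using \<delta>(4) by (intro ennreal_leI) simp
    finally show ?thesis .
  qed
  have "hausdorff_pre s \<epsilon> E \<le> 0" if "0 < \<epsilon>" for \<epsilon>
  proof (rule ennreal_le_epsilon)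
    fix e :: real assume "0 < e"
    then show "hausdorff_pre s \<epsilon> E \<le> 0 + ennreal e" using small[OF \<open>0 < \<epsilon>\<close>] by simp
  qed
  then show ?thesis unfolding hausdorff_measure_def by (simp add: SUP_least antisym)
qed

lemma hausdorff_dim_le_lower_box_dim:
  assumes "E \<noteq> {}" and covers: "\<And>\<delta>. 0 < \<delta> \<Longrightarrow> delta_covers \<delta> E \<noteq> {}"
  shows "hausdorff_dim E \<le> lower_box_dim E"
proof (rule dense_ge)
  fix x assume "lower_box_dim E < x"
  show "hausdorff_dim E \<le> x"
  proof (cases x)
    case (real s)
    obtain t where t: "lower_box_dim E < ereal t" "t < s"
      using ereal_dense2[OF \<open>lower_box_dim E < x\<close>] real by auto
    have "ereal 0 < ereal t"
      using order.strict_trans1[OF lower_box_dim_nonneg[OF assms] t(1)] by (simp add: zero_ereal_def)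
    then have "0 \<le> s" using t(2) by simp
    have "\<exists>\<^sub>F \<delta> in at_right 0. ln (real (cover_number \<delta> E)) / - ln \<delta> < t"
    proof (rule ccontr)
      assume "\<not> ?thesis"
      then have "\<forall>\<^sub>F \<delta> in at_right 0. ereal t \<le> ereal (ln (real (cover_number \<delta> E)) / - ln \<delta>)"
        by (simp add: not_frequently not_less)
      then have "ereal t \<le> lower_box_dim E" unfolding lower_box_dim_def by (rule Liminf_bounded)
      then show False using t(1) by simp
    qed
    then have "hausdorff_measure s E = 0"
      using assms t(2) \<open>0 \<le> s\<close> by (intro hausdorff_measure_eq_0_of_log_ratio_frequently_less)
    then show ?thesis unfolding hausdorff_dim_def real using \<open>0 \<le> s\<close> by (intro Inf_lower) blast
  qed (use \<open>lower_box_dim E < x\<close> in auto)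
qed

lemma emeasure_lborel_cbox_pair:
  fixes x1 x2 y1 y2 :: real
  assumes "x1 \<le> x2" "y1 \<le> y2"
  shows "emeasure lborel (cbox (x1, y1) (x2, y2)) = ennreal ((x2 - x1) * (y2 - y1))"
proof -
  have "emeasure lborel (cbox (x1, y1) (x2, y2)) = emeasure (lborel \<Otimes>\<^sub>M lborel) ({x1..x2} \<times> {y1..y2})"
    by (simp add: lborel_prod cbox_Pair_eq)
  also have "\<dots> = ennreal ((x2 - x1) * (y2 - y1))"
    using assms by (simp add: lborel.emeasure_pair_measure_Times ennreal_mult)
  finally show ?thesis .
qed

lemma projection_in_square:
  fixes U :: "((real \<times> real) \<times> 'b::metric_space) set"
  assumes "bounded U"
  obtains S where "S \<in> sets lborel" "fst ` U \<subseteq> S" "emeasure lborel S \<le> ennreal (4 * (diameter U)\<^sup>2)"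
proof (cases "U = {}")
  case True
  then show ?thesis using that[of "{}"] by simp
next
  case False
  then obtain u0 where u0: "u0 \<in> U" by blast
  define r where "r = diameter U"
  define S where "S = cbox (fst (fst u0) - r, snd (fst u0) - r) (fst (fst u0) + r, snd (fst u0) + r)"
  have "0 \<le> r" unfolding r_def using assms by (rule diameter_ge_0)
  have "fst u \<in> S" if "u \<in> U" for u
  proof -
    have "dist u u0 \<le> r" unfolding r_def by (rule diameter_bounded_bound[OF assms that u0])
    moreover have "dist (fst (fst u)) (fst (fst u0)) \<le> dist u u0"
      "dist (snd (fst u)) (snd (fst u0)) \<le> dist u u0"
      using dist_fst_le[of "fst u" "fst u0"] dist_snd_le[of "fst u" "fst u0"] dist_fst_le[of u u0]
      by linarith+
    ultimately show ?thesis
      by (cases "fst u") (auto simp: S_def cbox_Pair_eq dist_real_def abs_le_iff)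
  qed
  then have "fst ` U \<subseteq> S" by blast
  moreover have "S \<in> sets lborel" by (simp add: S_def)
  moreover have "emeasure lborel S = ennreal (4 * r\<^sup>2)"
    unfolding S_def using \<open>0 \<le> r\<close>
    by (subst emeasure_lborel_cbox_pair) (auto simp: power2_eq_square algebra_simps)
  ultimately show ?thesis using that[of S] by (simp add: r_def)
qed

lemma diameter_square_le_diam_pow:
  assumes "bounded U" "diameter U \<le> 1" "0 \<le> s" "s \<le> 2"
  shows "ennreal ((diameter U)\<^sup>2) \<le> diam_pow s U"
proof (cases "U = {}")
  case False
  have d: "0 \<le> diameter U" using assms(1) by (rule diameter_ge_0)
  have "(diameter U)\<^sup>2 \<le> (if s = 0 then 1 else diameter U powr s)"
  proof (cases "s = 0")
    case False
    have "(diameter U)\<^sup>2 = diameter U powr 2" using d by (simp add: powr_realpow')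
    also have "\<dots> \<le> diameter U powr s" using d assms by (intro powr_mono') auto
    finally show ?thesis using False by simp
  qed (use d assms in \<open>simp add: power_le_one\<close>)
  then show ?thesis using False by (auto simp: diam_pow_def intro: ennreal_leI)
qed (simp add: diam_pow_def)

lemma hausdorff_pre_ge_area:
  fixes E :: "((real \<times> real) \<times> 'b::metric_space) set"
  assumes proj: "cbox (a, c) (b, d) \<subseteq> fst ` E" and "a \<le> b" "c \<le> d" "0 \<le> s" "s \<le> 2"
  shows "ennreal ((b - a) * (d - c) / 4) \<le> hausdorff_pre s 1 E"
  unfolding hausdorff_pre_def
proof (rule Inf_greatest, clarify)
  fix U :: "nat \<Rightarrow> ((real \<times> real) \<times> 'b) set"
  assume cover: "E \<subseteq> (\<Union>i. U i)" and U: "\<forall>i. bounded (U i) \<and> diameter (U i) \<le> 1"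
  have "\<forall>i. \<exists>S. S \<in> sets lborel \<and> fst ` U i \<subseteq> S \<and> emeasure lborel S \<le> ennreal (4 * (diameter (U i))\<^sup>2)"
    using projection_in_square U by metis
  then obtain S where S: "\<And>i. S i \<in> sets lborel" "\<And>i. fst ` U i \<subseteq> S i"
      "\<And>i. emeasure lborel (S i) \<le> ennreal (4 * (diameter (U i))\<^sup>2)"
    by metis
  have "cbox (a, c) (b, d) \<subseteq> (\<Union>i. S i)"
  proof
    fix P assume "P \<in> cbox (a, c) (b, d)"
    then obtain z i where "P = fst z" "z \<in> U i" using proj cover by blast
    then show "P \<in> (\<Union>i. S i)" using S(2)[of i] by blast
  qed
  have S_le: "emeasure lborel (S i) \<le> ennreal 4 * diam_pow s (U i)" for i
  proof -
    have "ennreal ((diameter (U i))\<^sup>2) \<le> diam_pow s (U i)"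
      using U assms by (intro diameter_square_le_diam_pow) auto
    then have "ennreal 4 * ennreal ((diameter (U i))\<^sup>2) \<le> ennreal 4 * diam_pow s (U i)"
      by (rule mult_left_mono) simp
    then show ?thesis using S(3)[of i] by (simp add: ennreal_mult)
  qed
  have "ennreal 4 * ennreal ((b - a) * (d - c) / 4) = ennreal ((b - a) * (d - c))"
    using assms by (subst ennreal_mult[symmetric]) auto
  also have "\<dots> = emeasure lborel (cbox (a, c) (b, d))"
    using assms by (simp add: emeasure_lborel_cbox_pair)
  also have "\<dots> \<le> emeasure lborel (\<Union>i. S i)"
    using \<open>cbox (a, c) (b, d) \<subseteq> (\<Union>i. S i)\<close> S(1) by (intro emeasure_mono) auto
  also have "\<dots> \<le> (\<Sum>i. emeasure lborel (S i))"
    using S(1) by (intro emeasure_subadditive_countably) auto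
  also have "\<dots> \<le> (\<Sum>i. ennreal 4 * diam_pow s (U i))"
    using S_le by (intro suminf_le) auto
  also have "\<dots> = ennreal 4 * (\<Sum>i. diam_pow s (U i))" by simp
  finally show "ennreal ((b - a) * (d - c) / 4) \<le> (\<Sum>i. diam_pow s (U i))"
    by (subst (asm) ennreal_mult_le_mult_iff) auto
qed

lemma two_le_hausdorff_dim:
  fixes E :: "((real \<times> real) \<times> 'b::metric_space) set"
  assumes "cbox (a, c) (b, d) \<subseteq> fst ` E" "a < b" "c < d"
  shows "2 \<le> hausdorff_dim E"
  unfolding hausdorff_dim_def
proof (rule Inf_greatest, clarify)
  fix s :: real assume "0 \<le> s" "hausdorff_measure s E = 0"
  show "2 \<le> ereal s"
  proof (rule ccontr)
    assume "\<not> 2 \<le> ereal s"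
    then have "s \<le> 2" by simp
    have "0 < ennreal ((b - a) * (d - c) / 4)" using assms by simp
    also have "\<dots> \<le> hausdorff_pre s 1 E"
      using assms \<open>0 \<le> s\<close> \<open>s \<le> 2\<close> by (intro hausdorff_pre_ge_area) auto
    also have "\<dots> \<le> hausdorff_measure s E"
      unfolding hausdorff_measure_def by (rule SUP_upper) simp
    finally show False using \<open>hausdorff_measure s E = 0\<close> by simp
  qed
qed

section \<open>Graphs of Hoelder functions on a rectangle\<close>

lemma fst_graph_on: "fst ` graph_on a b c d g = cbox (a, c) (b, d)"
  unfolding graph_on_def cbox_Pair_eq by force

lemma floor_diff_le_ceiling_dist:
  fixes u v :: real
  shows "\<bar>\<lfloor>u\<rfloor> - \<lfloor>v\<rfloor>\<bar> \<le> \<lceil>\<bar>u - v\<bar>\<rceil>"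
proof -
  have "real_of_int \<bar>\<lfloor>u\<rfloor> - \<lfloor>v\<rfloor>\<bar> < \<bar>u - v\<bar> + 1"
    by linarith
  also have "\<dots> \<le> real_of_int (\<lceil>\<bar>u - v\<bar>\<rceil> + 1)" by linarith
  finally show ?thesis by linarith
qed

lemma dist_lt_of_floor_eq:
  fixes u v \<eta> :: real
  assumes "0 < \<eta>" "\<lfloor>u / \<eta>\<rfloor> = \<lfloor>v / \<eta>\<rfloor>"
  shows "\<bar>u - v\<bar> < \<eta>"
proof -
  have "\<bar>u / \<eta> - v / \<eta>\<bar> < 1" using assms(2) by linarith
  then show ?thesis using assms(1) by (simp add: diff_divide_distrib[symmetric] abs_divide)
qed

lemma dist_le_coordinate_sum:
  fixes x y z x' y' z' :: real
  shows "dist ((x, y), z) ((x', y'), z') \<le> \<bar>x - x'\<bar> + \<bar>y - y'\<bar> + \<bar>z - z'\<bar>"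
  using norm_Pair_le[of "(x - x', y - y')" "z - z'"] norm_Pair_le[of "x - x'" "y - y'"]
  by (simp add: dist_norm)

(* (ceil (W / eta) + 1)^2 base squares, with at most 2 ceil (L (2 eta)^gamma / eta) + 1 cells above each. *)
lemma cell_count_le:
  fixes \<eta> W L \<gamma> :: real
  assumes \<eta>: "0 < \<eta>" "\<eta> \<le> 1" and "0 \<le> W" "0 \<le> L" and \<gamma>: "0 < \<gamma>" "\<gamma> \<le> 1"
  shows "(of_int \<lceil>W / \<eta>\<rceil> + 1)\<^sup>2 * (2 * of_int \<lceil>L * (2 * \<eta>) powr \<gamma> / \<eta>\<rceil> + 1)
           \<le> (W + 2)\<^sup>2 * (4 * L + 3) * \<eta> powr (\<gamma> - 3)"
proof -
  have "\<eta> powr 1 \<le> \<eta> powr \<gamma>" using assms by (intro powr_mono') auto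
  then have ge1: "1 \<le> \<eta> powr \<gamma> / \<eta>" using \<eta> by simp
  have "of_int \<lceil>W / \<eta>\<rceil> + 1 \<le> W / \<eta> + 2" by linarith
  also have "\<dots> \<le> (W + 2) / \<eta>" using assms by (simp add: field_simps)
  finally have "of_int \<lceil>W / \<eta>\<rceil> + 1 \<le> (W + 2) / \<eta>" .
  moreover have "0 \<le> W / \<eta>" using assms by simp
  ultimately have side: "(of_int \<lceil>W / \<eta>\<rceil> + 1)\<^sup>2 \<le> ((W + 2) / \<eta>)\<^sup>2"
    by (intro power_mono) linarith+
  have "(2 * \<eta>) powr \<gamma> \<le> 2 * \<eta> powr \<gamma>"
    using assms powr_mono[of \<gamma> 1 2] by (simp add: powr_mult)
  then have "L * (2 * \<eta>) powr \<gamma> / \<eta> \<le> L * (2 * \<eta> powr \<gamma>) / \<eta>"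
    using assms by (intro divide_right_mono mult_left_mono) auto
  then have "L * (2 * \<eta>) powr \<gamma> / \<eta> \<le> 2 * L * (\<eta> powr \<gamma> / \<eta>)" by (simp add: mult_ac)
  then have "2 * of_int \<lceil>L * (2 * \<eta>) powr \<gamma> / \<eta>\<rceil> + 1 \<le> 4 * L * (\<eta> powr \<gamma> / \<eta>) + 3"
    by linarith
  also have "\<dots> \<le> (4 * L + 3) * (\<eta> powr \<gamma> / \<eta>)" using ge1 by (simp add: algebra_simps)
  finally have height: "2 * of_int \<lceil>L * (2 * \<eta>) powr \<gamma> / \<eta>\<rceil> + 1 \<le> (4 * L + 3) * (\<eta> powr \<gamma> / \<eta>)" .
  have "(of_int \<lceil>W / \<eta>\<rceil> + 1)\<^sup>2 * (2 * of_int \<lceil>L * (2 * \<eta>) powr \<gamma> / \<eta>\<rceil> + 1)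
      \<le> ((W + 2) / \<eta>)\<^sup>2 * ((4 * L + 3) * (\<eta> powr \<gamma> / \<eta>))"
  proof (rule mult_mono[OF side height])
    have "0 \<le> L * (2 * \<eta>) powr \<gamma> / \<eta>" using assms by simp
    then show "0 \<le> 2 * of_int \<lceil>L * (2 * \<eta>) powr \<gamma> / \<eta>\<rceil> + (1::real)" by linarith
  qed simp
  also have "\<dots> = (W + 2)\<^sup>2 * (4 * L + 3) * (\<eta> powr \<gamma> / \<eta> ^ 3)"
    by (simp add: power_divide power2_eq_square power3_eq_cube field_simps)
  also have "\<eta> powr \<gamma> / \<eta> ^ 3 = \<eta> powr (\<gamma> - 3)"
    using \<eta> by (simp add: powr_diff powr_realpow)
  finally show ?thesis .
qed

locale holder_graph =
  fixes a b c d L \<gamma> :: real and g :: "real \<times> real \<Rightarrow> real"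
  assumes rect: "a < b" "c < d"
    and exponent: "0 < \<gamma>" "\<gamma> \<le> 1" and L_nonneg: "0 \<le> L"
    and holder: "\<And>P Q. P \<in> cbox (a, c) (b, d) \<Longrightarrow> Q \<in> cbox (a, c) (b, d) \<Longrightarrow>
        \<bar>g P - g Q\<bar> \<le> L * dist P Q powr \<gamma>"
begin

abbreviation "G \<equiv> graph_on a b c d g"

lemma mem_graph: "z \<in> G \<longleftrightarrow> fst z \<in> cbox (a, c) (b, d) \<and> snd z = g (fst z)"
  unfolding graph_on_def cbox_Pair_eq by (cases z) auto

lemma holder_le:
  assumes "P \<in> cbox (a, c) (b, d)" "Q \<in> cbox (a, c) (b, d)" "dist P Q \<le> r"
  shows "\<bar>g P - g Q\<bar> \<le> L * r powr \<gamma>"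
proof -
  have "L * dist P Q powr \<gamma> \<le> L * r powr \<gamma>"
    using assms L_nonneg exponent by (intro mult_left_mono powr_mono2) auto
  then show ?thesis using holder[OF assms(1,2)] by linarith
qed

lemma graph_nonempty: "G \<noteq> {}"
  using mem_graph[of "((a, c), g (a, c))"] rect by auto

lemma bounded_graph: "bounded G"
proof -
  have "bounded (g ` cbox (a, c) (b, d))"
  proof (rule boundedI)
    fix w assume "w \<in> g ` cbox (a, c) (b, d)"
    then obtain P where P: "P \<in> cbox (a, c) (b, d)" "w = g P" by blast
    have ac: "(a, c) \<in> cbox (a, c) (b, d)" using rect by (auto simp: cbox_Pair_eq)
    have "dist P (a, c) \<le> diameter (cbox (a, c) (b, d))"
      using diameter_bounded_bound[OF bounded_cbox P(1) ac] .
    then have "\<bar>g P - g (a, c)\<bar> \<le> L * diameter (cbox (a, c) (b, d)) powr \<gamma>"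
      by (rule holder_le[OF P(1) ac])
    then show "norm w \<le> \<bar>g (a, c)\<bar> + L * diameter (cbox (a, c) (b, d)) powr \<gamma>"
      using P(2) by simp
  qed
  then have "bounded (cbox (a, c) (b, d) \<times> g ` cbox (a, c) (b, d))"
    by (intro bounded_Times bounded_cbox)
  moreover have "G \<subseteq> cbox (a, c) (b, d) \<times> g ` cbox (a, c) (b, d)"
    by (auto simp: mem_graph)
  ultimately show ?thesis by (rule bounded_subset)
qed

definition cell :: "real \<Rightarrow> int \<Rightarrow> int \<Rightarrow> int \<Rightarrow> ((real \<times> real) \<times> real) set" where
  "cell \<eta> i j k = {z \<in> G. \<lfloor>(fst (fst z) - a) / \<eta>\<rfloor> = i \<and> \<lfloor>(snd (fst z) - c) / \<eta>\<rfloor> = j \<and> \<lfloor>snd z / \<eta>\<rfloor> = k}"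

lemma cell_base_close:
  assumes "0 < \<eta>" "z \<in> cell \<eta> i j k" "z' \<in> cell \<eta> i j k'"
  shows "\<bar>fst (fst z) - fst (fst z')\<bar> < \<eta>" "\<bar>snd (fst z) - snd (fst z')\<bar> < \<eta>"
  using dist_lt_of_floor_eq[OF assms(1), of "fst (fst z) - a" "fst (fst z') - a"]
    dist_lt_of_floor_eq[OF assms(1), of "snd (fst z) - c" "snd (fst z') - c"] assms(2,3)
  by (auto simp: cell_def)

lemma cell_height_close:
  assumes "0 < \<eta>" "z \<in> cell \<eta> i j k" "z' \<in> cell \<eta> i j k"
  shows "\<bar>snd z - snd z'\<bar> < \<eta>"
  using dist_lt_of_floor_eq[OF assms(1), of "snd z" "snd z'"] assms(2,3) by (auto simp: cell_def)

lemma cell_diameter_le: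
  assumes "0 < \<eta>"
  shows "diameter (cell \<eta> i j k) \<le> 3 * \<eta>"
proof (rule diameter_le)
  fix z z' assume zz': "z \<in> cell \<eta> i j k" "z' \<in> cell \<eta> i j k"
  obtain x y w x' y' w' where z: "z = ((x, y), w)" "z' = ((x', y'), w')" by (metis prod.collapse)
  have "dist z z' \<le> \<bar>x - x'\<bar> + \<bar>y - y'\<bar> + \<bar>w - w'\<bar>"
    unfolding z by (rule dist_le_coordinate_sum)
  then show "norm (z - z') \<le> 3 * \<eta>"
    using cell_base_close[OF assms zz'] cell_height_close[OF assms zz'] by (simp add: z dist_norm)
qed (use assms in simp)

lemma cell_height_diff_le:
  assumes "0 < \<eta>" "z \<in> cell \<eta> i j k" "z' \<in> cell \<eta> i j k'"
  shows "\<bar>k - k'\<bar> \<le> \<lceil>L * (2 * \<eta>) powr \<gamma> / \<eta>\<rceil>"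
proof -
  obtain x y w x' y' w' where z: "z = ((x, y), w)" "z' = ((x', y'), w')" by (metis prod.collapse)
  have zG: "z \<in> G" "z' \<in> G" using assms by (auto simp: cell_def)
  have "dist (x, y) (x', y') \<le> \<bar>x - x'\<bar> + \<bar>y - y'\<bar>"
    using norm_Pair_le[of "x - x'" "y - y'"] by (simp add: dist_norm)
  then have "dist (x, y) (x', y') \<le> 2 * \<eta>" using cell_base_close[OF assms] by (simp add: z)
  then have "\<bar>w - w'\<bar> \<le> L * (2 * \<eta>) powr \<gamma>"
    using holder_le[of "(x, y)" "(x', y')"] zG by (auto simp: mem_graph z)
  then have "\<bar>w / \<eta> - w' / \<eta>\<bar> \<le> L * (2 * \<eta>) powr \<gamma> / \<eta>"
    using assms(1) by (simp add: diff_divide_distrib[symmetric] abs_divide divide_right_mono)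
  then have "\<bar>\<lfloor>w / \<eta>\<rfloor> - \<lfloor>w' / \<eta>\<rfloor>\<bar> \<le> \<lceil>L * (2 * \<eta>) powr \<gamma> / \<eta>\<rceil>"
    using floor_diff_le_ceiling_dist ceiling_mono order_trans by blast
  then show ?thesis using assms by (simp add: cell_def z)
qed

lemma cell_heights_card_le:
  assumes "0 < \<eta>"
  shows "finite {k. cell \<eta> i j k \<noteq> {}}"
    "card {k. cell \<eta> i j k \<noteq> {}} \<le> nat (2 * \<lceil>L * (2 * \<eta>) powr \<gamma> / \<eta>\<rceil> + 1)"
proof -
  define m where "m = \<lceil>L * (2 * \<eta>) powr \<gamma> / \<eta>\<rceil>"
  have "\<exists>k0. {k. cell \<eta> i j k \<noteq> {}} \<subseteq> {k0 - m..k0 + m}"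
  proof (cases "{k. cell \<eta> i j k \<noteq> {}} = {}")
    case False
    then obtain k0 z0 where z0: "z0 \<in> cell \<eta> i j k0" by auto
    have "{k. cell \<eta> i j k \<noteq> {}} \<subseteq> {k0 - m..k0 + m}"
      using cell_height_diff_le[OF assms _ z0] by (force simp: m_def abs_le_iff)
    then show ?thesis ..
  qed simp
  then obtain k0 where sub: "{k. cell \<eta> i j k \<noteq> {}} \<subseteq> {k0 - m..k0 + m}" ..
  then show "finite {k. cell \<eta> i j k \<noteq> {}}" using finite_subset by blast
  show "card {k. cell \<eta> i j k \<noteq> {}} \<le> nat (2 * m + 1)"
    using card_mono[OF _ sub] by simp
qed

lemma graph_cell_index:
  assumes "0 < \<eta>" "z \<in> G"
  shows "\<lfloor>(fst (fst z) - a) / \<eta>\<rfloor> \<in> {0..\<lceil>max (b - a) (d - c) / \<eta>\<rceil>}"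
    "\<lfloor>(snd (fst z) - c) / \<eta>\<rfloor> \<in> {0..\<lceil>max (b - a) (d - c) / \<eta>\<rceil>}"
proof -
  have index: "\<lfloor>u / \<eta>\<rfloor> \<in> {0..\<lceil>max (b - a) (d - c) / \<eta>\<rceil>}" if "0 \<le> u" "u \<le> max (b - a) (d - c)" for u
  proof -
    have "of_int \<lfloor>u / \<eta>\<rfloor> \<le> u / \<eta>" "u / \<eta> \<le> max (b - a) (d - c) / \<eta>"
      using that assms by (auto simp: divide_right_mono)
    then have "of_int \<lfloor>u / \<eta>\<rfloor> \<le> (of_int \<lceil>max (b - a) (d - c) / \<eta>\<rceil> :: real)"
      by (meson le_of_int_ceiling order_trans)
    then show ?thesis using that assms by simp
  qed
  have "a \<le> fst (fst z)" "fst (fst z) \<le> b" "c \<le> snd (fst z)" "snd (fst z) \<le> d"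
    using assms by (auto simp: mem_graph cbox_Pair_eq)
  then show "\<lfloor>(fst (fst z) - a) / \<eta>\<rfloor> \<in> {0..\<lceil>max (b - a) (d - c) / \<eta>\<rceil>}"
    "\<lfloor>(snd (fst z) - c) / \<eta>\<rfloor> \<in> {0..\<lceil>max (b - a) (d - c) / \<eta>\<rceil>}"
    by (intro index; simp add: le_max_iff_disj)+
qed

lemma graph_cell_cover:
  assumes \<eta>: "0 < \<eta>" "\<eta> \<le> 1"
  obtains C where "C \<in> delta_covers (3 * \<eta>) G"
    "real (card C) \<le> (max (b - a) (d - c) + 2)\<^sup>2 * (4 * L + 3) * \<eta> powr (\<gamma> - 3)"
proof -
  define N where "N = \<lceil>max (b - a) (d - c) / \<eta>\<rceil>"
  define m where "m = \<lceil>L * (2 * \<eta>) powr \<gamma> / \<eta>\<rceil>"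
  define I where "I = (SIGMA ij:{0..N} \<times> {0..N}. {k. cell \<eta> (fst ij) (snd ij) k \<noteq> {}})"
  define C where "C = (\<lambda>(ij, k). cell \<eta> (fst ij) (snd ij) k) ` I"
  note heights = cell_heights_card_le[OF \<eta>(1)]
  have "0 \<le> L * (2 * \<eta>) powr \<gamma> / \<eta>" "0 \<le> max (b - a) (d - c) / \<eta>" using L_nonneg \<eta> rect by auto
  then have "0 \<le> m" "0 \<le> N" by (simp_all add: m_def N_def)
  have "card C \<le> card I" unfolding C_def by (rule card_image_le) (use heights in \<open>simp add: I_def\<close>)
  also have "\<dots> = (\<Sum>ij\<in>{0..N} \<times> {0..N}. card {k. cell \<eta> (fst ij) (snd ij) k \<noteq> {}})"
    unfolding I_def using heights by (intro card_SigmaI) auto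
  also have "\<dots> \<le> card ({0..N} \<times> {0..N}) * nat (2 * m + 1)"
    using heights sum_bounded_above[of "{0..N} \<times> {0..N}" "\<lambda>ij. card {k. cell \<eta> (fst ij) (snd ij) k \<noteq> {}}"]
    by (auto simp: m_def)
  finally have "real (card C) \<le> real (nat (N + 1) * nat (N + 1) * nat (2 * m + 1))"
    by (simp only: card_cartesian_product card_atLeastAtMost_int of_nat_le_iff diff_0_right)
  also have "\<dots> = (of_int N + 1)\<^sup>2 * (2 * of_int m + 1)"
    using \<open>0 \<le> m\<close> \<open>0 \<le> N\<close> by (simp add: power2_eq_square)
  also have "\<dots> \<le> (max (b - a) (d - c) + 2)\<^sup>2 * (4 * L + 3) * \<eta> powr (\<gamma> - 3)"
    unfolding N_def m_def using \<eta> L_nonneg exponent rect by (intro cell_count_le) auto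
  finally have card: "real (card C) \<le> (max (b - a) (d - c) + 2)\<^sup>2 * (4 * L + 3) * \<eta> powr (\<gamma> - 3)" .
  have "G \<subseteq> \<Union>C"
  proof
    fix z assume "z \<in> G"
    then have "z \<in> cell \<eta> \<lfloor>(fst (fst z) - a) / \<eta>\<rfloor> \<lfloor>(snd (fst z) - c) / \<eta>\<rfloor> \<lfloor>snd z / \<eta>\<rfloor>"
      by (simp add: cell_def)
    moreover from this have "((\<lfloor>(fst (fst z) - a) / \<eta>\<rfloor>, \<lfloor>(snd (fst z) - c) / \<eta>\<rfloor>), \<lfloor>snd z / \<eta>\<rfloor>) \<in> I"
      using graph_cell_index[OF \<eta>(1) \<open>z \<in> G\<close>] by (auto simp: I_def N_def)
    ultimately show "z \<in> \<Union>C" by (force simp: C_def)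
  qed
  moreover have "bounded U \<and> diameter U \<le> 3 * \<eta>" if "U \<in> C" for U
    using that bounded_subset[OF bounded_graph] cell_diameter_le[OF \<eta>(1)]
    by (auto simp: C_def cell_def)
  moreover have "finite C" unfolding C_def I_def using heights by auto
  ultimately have "C \<in> delta_covers (3 * \<eta>) G" by (auto simp: delta_covers_def)
  then show ?thesis using that card by blast
qed

lemma graph_delta_covers_nonempty:
  assumes "0 < \<delta>"
  shows "delta_covers \<delta> G \<noteq> {}"
proof -
  have "0 < min \<delta> 1 / 3" "min \<delta> 1 / 3 \<le> 1" using assms by auto
  then obtain C where "C \<in> delta_covers (3 * (min \<delta> 1 / 3)) G"
    by (rule graph_cell_cover)
  then have "C \<in> delta_covers \<delta> G" by (auto simp: delta_covers_def)
  then show ?thesis by blast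
qed

lemma upper_box_dim_graph_le: "upper_box_dim G \<le> ereal (3 - \<gamma>)"
proof -
  define K where "K = (max (b - a) (d - c) + 2)\<^sup>2 * (4 * L + 3)"
  have "0 < K" using rect L_nonneg by (simp add: K_def max_def)
  have "eventually (\<lambda>\<delta>. 0 < real (cover_number \<delta> G) \<and>
          real (cover_number \<delta> G) \<le> K * 3 powr (3 - \<gamma>) * \<delta> powr (- (3 - \<gamma>))) (at_right 0)"
    using eventually_at_right_real[OF zero_less_one]
  proof eventually_elim
    case (elim \<delta>)
    then obtain C where C: "C \<in> delta_covers (3 * (\<delta> / 3)) G"
        "real (card C) \<le> K * (\<delta> / 3) powr (\<gamma> - 3)"
      using graph_cell_cover[of "\<delta> / 3"] unfolding K_def by auto
    have "real (cover_number \<delta> G) \<le> real (card C)"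
      using cover_number_le_card C(1) by simp
    also have "\<dots> \<le> K * 3 powr (3 - \<gamma>) * \<delta> powr (- (3 - \<gamma>))"
      using C(2) elim by (simp add: powr_divide powr_minus_divide divide_powr_uminus field_simps)
    finally show ?case
      using cover_number_pos[OF graph_nonempty graph_delta_covers_nonempty] elim by simp
  qed
  then show ?thesis
    unfolding upper_box_dim_def using \<open>0 < K\<close> by (intro Limsup_log_ratio_le) auto
qed

lemma graph_dimension_bounds:
  "2 \<le> hausdorff_dim G \<and> hausdorff_dim G \<le> lower_box_dim G \<and>
   lower_box_dim G \<le> upper_box_dim G \<and> upper_box_dim G \<le> ereal (3 - \<gamma>)"
  using two_le_hausdorff_dim[of a c b d G] rect
    hausdorff_dim_le_lower_box_dim[OF graph_nonempty graph_delta_covers_nonempty]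
    lower_box_dim_le_upper_box_dim upper_box_dim_graph_le
  by (simp add: fst_graph_on)

end

lemma holder_graph_katugampola_mixed:
  fixes f :: "real \<times> real \<Rightarrow> real"
  assumes "continuous_on (cbox (a, c) (b, d)) f" "0 < a" "a < b" "0 < c" "c < d"
    "-1 < p" "p \<le> 0" "-1 < q" "q \<le> 0" "0 < \<alpha>" "0 < \<beta>"
  obtains L where
    "holder_graph a b c d L (min (min \<alpha> 1) (min \<beta> 1)) (katugampola_mixed p q a c \<alpha> \<beta> f)"
proof -
  obtain L where "0 < L"
    "\<And>P Q. P \<in> cbox (a, c) (b, d) \<Longrightarrow> Q \<in> cbox (a, c) (b, d) \<Longrightarrow>
       \<bar>katugampola_mixed p q a c \<alpha> \<beta> f P - katugampola_mixed p q a c \<alpha> \<beta> f Q\<bar>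
         \<le> L * dist P Q powr min (min \<alpha> 1) (min \<beta> 1)"
    using katugampola_mixed_holder[of a c b d f p q \<alpha> \<beta>] assms by blast
  then show ?thesis using assms by (intro that[of L]) (unfold_locales, auto)
qed

theorem mainTheorem8:
  fixes f :: "real \<times> real \<Rightarrow> real" and a b c d p q \<alpha> \<beta> :: real
  assumes "continuous_on (cbox (a, c) (b, d)) f"
    and "0 < a" "a < b" "0 < c" "c < d"
    and "-1 < p" "p \<le> 0" "-1 < q" "q \<le> 0"
  shows "(0 < \<alpha> \<and> \<alpha> < 1 \<and> 0 < \<beta> \<and> \<beta> < 1 \<longrightarrow>
           (let G = graph_on a b c d (katugampola_mixed p q a c \<alpha> \<beta> f) in
              2 \<le> hausdorff_dim G \<and> hausdorff_dim G \<le> upper_box_dim G \<and>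
              upper_box_dim G \<le> ereal (3 - min \<alpha> \<beta>)))
       \<and> (1 \<le> \<alpha> \<and> 1 \<le> \<beta> \<longrightarrow>
           (let G = graph_on a b c d (katugampola_mixed p q a c \<alpha> \<beta> f) in
              box_dim_exists G \<and> hausdorff_dim G = 2 \<and> box_dim G = 2))"
proof -
  let ?G = "graph_on a b c d (katugampola_mixed p q a c \<alpha> \<beta> f)"
  have bounds: "2 \<le> hausdorff_dim ?G \<and> hausdorff_dim ?G \<le> lower_box_dim ?G \<and>
      lower_box_dim ?G \<le> upper_box_dim ?G \<and> upper_box_dim ?G \<le> ereal (3 - min (min \<alpha> 1) (min \<beta> 1))"
    if pos: "0 < \<alpha>" "0 < \<beta>"
  proof -
    obtain L where "holder_graph a b c d L (min (min \<alpha> 1) (min \<beta> 1)) (katugampola_mixed p q a c \<alpha> \<beta> f)"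
      using holder_graph_katugampola_mixed[OF assms pos] .
    then show ?thesis by (rule holder_graph.graph_dimension_bounds)
  qed
  show ?thesis
  proof (intro conjI impI)
    assume "0 < \<alpha> \<and> \<alpha> < 1 \<and> 0 < \<beta> \<and> \<beta> < 1"
    then show "let G = ?G in 2 \<le> hausdorff_dim G \<and> hausdorff_dim G \<le> upper_box_dim G \<and>
        upper_box_dim G \<le> ereal (3 - min \<alpha> \<beta>)"
      using bounds by (auto simp: Let_def intro: order_trans)
  next
    assume "1 \<le> \<alpha> \<and> 1 \<le> \<beta>"
    then have "2 \<le> hausdorff_dim ?G" "hausdorff_dim ?G \<le> lower_box_dim ?G"
      "lower_box_dim ?G \<le> upper_box_dim ?G" "upper_box_dim ?G \<le> 2"
      using bounds by auto
    then show "let G = ?G in box_dim_exists G \<and> hausdorff_dim G = 2 \<and> box_dim G = 2"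
      unfolding Let_def box_dim_exists_def box_dim_def by (metis antisym order_trans)
  qed
qed

end
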